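(* The problem of sustainable evolution is undecidable even when the input stream is fixed to be the all-$0$ stream $000\cdots$: there is no algorithm that, given a deterministic autopoietic automaton $A$, decides whether $A$, reading the input stream $000\cdots$, generates an infinite lineage.
   Context: A (deterministic) autopoietic automaton $A$ is a finite automaton with state set $Q$, a start state $q_0 \in Q\setminus R$, a subset $R\subseteq Q$ of reproducing-mode states (states in $Q\setminus R$ are transducer-mode states), a special state $q_1\in R$, and a transition partial function $\delta$. The automaton has a finite read-only input tape containing the code of $A$ (a sequence of 5-tuples, one per transition). In reproducing mode the automaton moves a head on this input tape and writes onto a one-way output tape; in transducer mode it reads one symbol at a time from an infinite input stream and writes one symbol at a time to an output stream. When reproducing mode ends by entering $q_1$, $A$ splits into the old $A$ and an offspring $A'$ whose input tape is the previous output tape; both restart in $q_0$, and the offspring continues reading the input stream from the current position. If the offspring's input tape is not a proper encoding of a transition function, it stops. A lineage is a sequence $A_1=A, A_2, \dots$ in which each $A_{i+1}$ is the new offspring of $A_i$. The problem of sustainable evolution asks, for an autopoietic automaton and an infinite input stream, whether the automaton generates an infinite lineage on that input. *)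

theory Defs
  imports Main
begin

datatype recf =
    Zr
  | Sc
  | Id nat nat
  | Cn nat recf "recf list"
  | Pr nat recf recf
  | Mn nat recf

inductive rec_eval :: "recf \<Rightarrow> nat list \<Rightarrow> nat \<Rightarrow> bool" where
  ev_Zr: "rec_eval Zr [x] 0"
| ev_Sc: "rec_eval Sc [x] (Suc x)"
| ev_Id: "\<lbrakk>k < n; length xs = n\<rbrakk> \<Longrightarrow> rec_eval (Id n k) xs (xs ! k)"
| ev_Cn: "\<lbrakk>length xs = n; list_all2 (\<lambda>g y. rec_eval g xs y) gs ys; rec_eval f ys z\<rbrakk>
          \<Longrightarrow> rec_eval (Cn n f gs) xs z"
| ev_Pr0: "\<lbrakk>length xs = n; rec_eval f xs y\<rbrakk> \<Longrightarrow> rec_eval (Pr n f g) (0 # xs) y"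
| ev_PrS: "\<lbrakk>rec_eval (Pr n f g) (x # xs) y; rec_eval g (x # y # xs) z\<rbrakk>
          \<Longrightarrow> rec_eval (Pr n f g) (Suc x # xs) z"
| ev_Mn: "\<lbrakk>length xs = n; rec_eval f (r # xs) 0;
           \<forall>i<r. \<exists>y. rec_eval f (i # xs) y \<and> y \<noteq> 0\<rbrakk>
          \<Longrightarrow> rec_eval (Mn n f) xs r"

text \<open>Tape alphabet.  \<open>Z\<close> is the stream symbol 0; \<open>One1\<close> is the unary digit used
  in encodings; \<open>SR\<close>/\<open>ST\<close> flag reproducing/transducer states; \<open>EndN\<close> ends a
  state number; \<open>MvL\<close>,\<open>MvN\<close>,\<open>MvR\<close> encode head moves; \<open>LEnd\<close>/\<open>REnd\<close> are the
  endmarkers of the input tape; writing \<open>Blank\<close> in reproducing mode writes nothing.\<close>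

datatype sym = Z | One1 | SR | ST | EndN | MvL | MvN | MvR | LEnd | REnd | Blank

datatype move = Lft | Stay | Rgt

text \<open>A state is a pair (number, reproducing-flag); \<open>R\<close> = states with flag True.\<close>
type_synonym state = "nat \<times> bool"

definition q0 :: state where "q0 = (0, False)"
definition q1 :: state where "q1 = (0, True)"

type_synonym tuple = "state \<times> sym \<times> state \<times> sym \<times> move"

fun enc_state :: "state \<Rightarrow> sym list" where
  "enc_state (k, r) = [if r then SR else ST] @ replicate k One1 @ [EndN]"

fun enc_move :: "move \<Rightarrow> sym" where
  "enc_move Lft = MvL" | "enc_move Stay = MvN" | "enc_move Rgt = MvR"

fun enc_tuple :: "tuple \<Rightarrow> sym list" where
  "enc_tuple (p, a, q, b, d) = enc_state p @ [a] @ enc_state q @ [b] @ [enc_move d]"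

definition functional_tuples :: "tuple list \<Rightarrow> bool" where
  "functional_tuples ts \<longleftrightarrow>
     (\<forall>t1\<in>set ts. \<forall>t2\<in>set ts. fst t1 = fst t2 \<and> fst (snd t1) = fst (snd t2) \<longrightarrow> t1 = t2)"

definition proper_code :: "sym list \<Rightarrow> bool" where
  "proper_code w \<longleftrightarrow> (\<exists>ts. w = concat (map enc_tuple ts) \<and> functional_tuples ts)"

text \<open>The transition relation encoded by a word (a partial function for proper codes,
  since the encoding is uniquely decodable).\<close>
definition has_tuple :: "sym list \<Rightarrow> tuple \<Rightarrow> bool" where
  "has_tuple w t \<longleftrightarrow> (\<exists>ts. w = concat (map enc_tuple ts) \<and> t \<in> set ts)"

definition tape :: "sym list \<Rightarrow> sym list" where
  "tape w = LEnd # w @ [REnd]"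

fun move_head :: "nat \<Rightarrow> move \<Rightarrow> nat \<Rightarrow> nat" where
  "move_head len Lft i = i - 1"
| "move_head len Stay i = i"
| "move_head len Rgt i = min (Suc i) (len - 1)"

text \<open>Configuration of one individual: state, input-head position, output tape.
  The input stream is the all-0 stream, so every symbol read from it is \<open>Z\<close>
  (and the position in the stream is irrelevant); the output stream is irrelevant
  for lineages and is not recorded.\<close>
type_synonym config = "state \<times> nat \<times> sym list"

definition step :: "sym list \<Rightarrow> config \<Rightarrow> config \<Rightarrow> bool" where
  "step w c c' \<longleftrightarrow>
     (case c of (q, i, out) \<Rightarrow> case c' of (q', i', out') \<Rightarrow>
       (\<exists>a b d. has_tuple w (q, a, q', b, d) \<and>
          (if snd q then
             a = tape w ! i \<and> i' = move_head (length (tape w)) d i \<and>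
             out' = (if b = Blank then out else out @ [b])
           else a = Z \<and> i' = i \<and> out' = out)))"

text \<open>A step that does not enter \<open>q1\<close> (entering \<open>q1\<close> immediately causes a split).\<close>
definition step_nq :: "sym list \<Rightarrow> config \<Rightarrow> config \<Rightarrow> bool" where
  "step_nq w c c' \<longleftrightarrow> step w c c' \<and> fst c' \<noteq> q1"

text \<open>\<open>offspring w w'\<close>: the automaton with code \<open>w\<close>, started in \<open>q0\<close> with the
  input head on the left endmarker and empty output tape, reading \<open>000\<cdots>\<close>,
  first enters \<open>q1\<close> with output tape \<open>w'\<close>; \<open>w'\<close> is the offspring's input tape.\<close>
definition offspring :: "sym list \<Rightarrow> sym list \<Rightarrow> bool" where
  "offspring w w' \<longleftrightarrow> proper_code w \<and>
     (\<exists>c i. (step_nq w)\<^sup>*\<^sup>* (q0, 0, []) c \<and> step w c (q1, i, w'))"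

definition infinite_lineage :: "sym list \<Rightarrow> bool" where
  "infinite_lineage w \<longleftrightarrow>
     (\<exists>A :: nat \<Rightarrow> sym list. A 0 = w \<and> (\<forall>n. offspring (A n) (A (Suc n))))"

fun sym_num :: "sym \<Rightarrow> nat" where
  "sym_num Z = 0" | "sym_num One1 = 1" | "sym_num SR = 2" | "sym_num ST = 3"
| "sym_num EndN = 4" | "sym_num MvL = 5" | "sym_num MvN = 6" | "sym_num MvR = 7"
| "sym_num LEnd = 8" | "sym_num REnd = 9" | "sym_num Blank = 10"

fun word_num :: "sym list \<Rightarrow> nat" where
  "word_num [] = 0"
| "word_num (s # w) = Suc (sym_num s) + 11 * word_num w"

end

theory Submission
  imports Defs "HOL-Library.Countable"
begin

text \<open>We diagonalise against a self-replicating simulator of counter machines.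
  For a counter program \<open>p\<close>, the code of the simulator consists of control transitions
  together with data tuples that are never executed and record a configuration of \<open>p\<close>: the
  program counter is the target of the transition leaving \<open>q0\<close>, and the content of
  register \<open>j\<close> is the target state of the \<open>j\<close>-th register tuple. In its reproducing phase
  the automaton copies its code, rewriting the data tuples into the configuration after one
  step of \<open>p\<close>; once \<open>p\<close> has halted it has no move from its start state and no offspring.
  So the lineage is infinite iff \<open>p\<close> runs forever.

  Given a recursive decider \<open>f\<close>, compile \<open>a \<mapsto> f (N a)\<close> into a counter program and append an
  instruction that halts on result 1 and loops on result 0; here \<open>N a\<close> is the number of the
  simulator's initial code with \<open>a\<close> in register 0. That code is a prefix depending only on
  \<open>a\<close> followed by a fixed tail, so taking \<open>a\<close> to be the number of the tail makes \<open>N a\<close> the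
  number of the automaton itself, whose lineage is then infinite iff \<open>f\<close> says it is not.\<close>

section \<open>Counter machines\<close>

datatype instr = Inc nat | Dec nat nat

type_synonym regs = "nat \<Rightarrow> nat"
type_synonym cconf = "nat \<times> regs"

definition cstep :: "instr list \<Rightarrow> cconf \<Rightarrow> cconf \<Rightarrow> bool" where
 "cstep p c c' \<longleftrightarrow> (case c of (pc, s) \<Rightarrow> pc < length p \<and>
    (case p ! pc of Inc r \<Rightarrow> c' = (Suc pc, s(r := Suc (s r)))
     | Dec r j \<Rightarrow> c' = (if s r = 0 then (j, s) else (Suc pc, s(r := s r - 1)))))"

fun shift_instr :: "nat \<Rightarrow> instr \<Rightarrow> instr" where
  "shift_instr n (Inc r) = Inc r" | "shift_instr n (Dec r j) = Dec r (j+n)"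

definition shift :: "nat \<Rightarrow> instr list \<Rightarrow> instr list" where "shift n p = map (shift_instr n) p"

definition reaches :: "instr list \<Rightarrow> regs \<Rightarrow> regs \<Rightarrow> bool" where
  "reaches p s s' \<longleftrightarrow> (cstep p)\<^sup>*\<^sup>* (0,s) (length p, s')"

definition seq_prog :: "instr list \<Rightarrow> instr list \<Rightarrow> instr list" (infixr "\<bullet>" 60) where
  "seq_prog p q = p @ shift (length p) q"

lemma shift0[simp]: "shift 0 p = p"
proof -
  have "shift_instr 0 i = i" for i by (cases i) auto
  then show ?thesis unfolding shift_def by (simp add: map_idI)
qed

lemma length_shift[simp]: "length (shift n p) = length p" by (simp add: shift_def)
lemma length_seq_prog[simp]: "length (p \<bullet> q) = length p + length q" by (simp add: seq_prog_def)

lemma cstep_embed: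
  assumes "cstep p (i,s) (j,s')"
  shows "cstep (pre @ shift (length pre) p @ post) (length pre + i, s) (length pre + j, s')"
proof -
  have i: "i < length p" using assms by (simp add: cstep_def)
  have nth: "(pre @ shift (length pre) p @ post) ! (length pre + i) = shift_instr (length pre) (p ! i)"
    using i by (simp add: nth_append shift_def)
  show ?thesis using assms i unfolding cstep_def
    by (cases "p ! i") (simp_all only: nth shift_instr.simps split_conv instr.case, auto)
qed

lemma rtranclp_cstep_embed:
  assumes "(cstep p)\<^sup>*\<^sup>* (i,s) (j,s')"
  shows "(cstep (pre @ shift (length pre) p @ post))\<^sup>*\<^sup>* (length pre + i, s) (length pre + j, s')"
  using assms
proof (induction rule: rtranclp_induct2)
  case refl then show ?case by simp
next
  case (step a b c d)
  then show ?case using cstep_embed[of p a b c d pre post]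
    by (meson rtranclp.rtrancl_into_rtrancl)
qed

lemma reaches_embed:
  assumes "reaches p s s'"
  shows "(cstep (pre @ shift (length pre) p @ post))\<^sup>*\<^sup>* (length pre, s) (length pre + length p, s')"
  using rtranclp_cstep_embed[OF assms[unfolded reaches_def], of pre post] by simp

lemma reaches_seq_prog: "reaches p s1 s2 \<Longrightarrow> reaches q s2 s3 \<Longrightarrow> reaches (p \<bullet> q) s1 s3"
proof -
  assume a: "reaches p s1 s2" and b: "reaches q s2 s3"
  have 1: "(cstep (p \<bullet> q))\<^sup>*\<^sup>* (0, s1) (length p, s2)"
    using reaches_embed[OF a, of "[]" "shift (length p) q"] by (simp add: seq_prog_def)
  have 2: "(cstep (p \<bullet> q))\<^sup>*\<^sup>* (length p, s2) (length p + length q, s3)"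
    using reaches_embed[OF b, of p "[]"] by (simp add: seq_prog_def)
  show ?thesis unfolding reaches_def using 1 2 by simp
qed

lemma reaches_nil[simp]: "reaches [] s s' \<longleftrightarrow> s' = s"
proof
  assume "reaches [] s s'"
  then have "(cstep [])\<^sup>*\<^sup>* (0,s) (0,s')" by (simp add: reaches_def)
  then show "s' = s"
    by (cases rule: converse_rtranclpE) (auto simp: cstep_def)
qed (simp add: reaches_def)

lemma reaches_Inc: "reaches [Inc r] s (s(r := Suc (s r)))"
  unfolding reaches_def by (rule r_into_rtranclp) (simp add: cstep_def)

text \<open>Register 1 is kept at 0 throughout, so \<open>Dec 1 j\<close> is an unconditional jump to \<open>j\<close>.\<close>
definition test_loop :: "instr list \<Rightarrow> nat \<Rightarrow> instr list \<Rightarrow> instr list" where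
  "test_loop B1 t B2 = B1 @ [Dec t (length B1 + length B2 + 2)] @ shift (Suc (length B1)) B2 @ [Dec 1 0]"

lemma reaches_test_loop:
  assumes body: "\<And>i. i < n \<Longrightarrow> X i t \<noteq> 0 \<and> reaches B1 (S i) (X i) \<and>
        reaches B2 ((X i)(t := X i t - 1)) (S (Suc i)) \<and> S (Suc i) 1 = 0"
    and fin: "reaches B1 (S n) (X n)" "X n t = 0"
  shows "reaches (test_loop B1 t B2) (S 0) (X n)"
proof -
  let ?W = "test_loop B1 t B2"
  have test: "(cstep ?W)\<^sup>*\<^sup>* (0, S i) (length B1, X i)" if "i \<le> n" for i
  proof -
    have "reaches B1 (S i) (X i)" using body fin(1) that by (cases "i = n") auto
    from reaches_embed[OF this, of "[]"] show ?thesis by (simp add: test_loop_def)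
  qed
  have round: "(cstep ?W)\<^sup>*\<^sup>* (length B1, X i) (0, S (Suc i))" if "i < n" for i
  proof -
    from body[OF that] have nz: "X i t \<noteq> 0" and B2: "reaches B2 ((X i)(t := X i t - 1)) (S (Suc i))"
      and z: "S (Suc i) 1 = 0" by auto
    have "cstep ?W (length B1, X i) (Suc (length B1), (X i)(t := X i t - 1))"
      using nz by (simp add: cstep_def test_loop_def nth_append)
    moreover have "(cstep ?W)\<^sup>*\<^sup>* (Suc (length B1), (X i)(t := X i t - 1)) (Suc (length B1) + length B2, S (Suc i))"
      using reaches_embed[OF B2, of "B1 @ [Dec t (length B1 + length B2 + 2)]" "[Dec 1 0]"]
      by (simp add: test_loop_def)
    moreover have "cstep ?W (Suc (length B1) + length B2, S (Suc i)) (0, S (Suc i))"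
      using z by (simp add: cstep_def test_loop_def nth_append)
    ultimately show ?thesis by (meson converse_rtranclp_into_rtranclp rtranclp.rtrancl_into_rtrancl rtranclp_trans)
  qed
  have exit: "cstep ?W (length B1, X n) (length ?W, X n)"
    using fin(2) by (simp add: cstep_def test_loop_def nth_append)
  have "(cstep ?W)\<^sup>*\<^sup>* (0, S i) (length ?W, X n)" if "i \<le> n" for i
    using that
  proof (induction "n - i" arbitrary: i)
    case 0
    then have "i = n" by simp
    with test[of n] exit show ?case by simp
  next
    case (Suc m)
    then have i: "i < n" by simp
    with Suc.hyps have "(cstep ?W)\<^sup>*\<^sup>* (0, S (Suc i)) (length ?W, X n)" by simp
    with test[of i] round[OF i] i show ?case by (meson less_imp_le rtranclp_trans)
  qed
  then show ?thesis unfolding reaches_def by simp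
qed

definition while_nz :: "nat \<Rightarrow> instr list \<Rightarrow> instr list" where
  "while_nz k body = test_loop [] k body"

lemma reaches_while_nz:
  assumes body: "\<And>i. i < n \<Longrightarrow> S i k \<noteq> 0 \<and> reaches body ((S i)(k := S i k - 1)) (S (Suc i)) \<and> S (Suc i) 1 = 0"
    and fin: "S n k = 0"
  shows "reaches (while_nz k body) (S 0) (S n)"
  unfolding while_nz_def by (rule reaches_test_loop[where X = S]) (use body fin in auto)

lemma reaches_eq: "reaches p s s1 \<Longrightarrow> s1 = s2 \<Longrightarrow> reaches p s s2" by simp

definition clear_reg :: "nat \<Rightarrow> instr list" where "clear_reg r = while_nz r []"
definition move_reg :: "nat \<Rightarrow> nat \<Rightarrow> instr list" where "move_reg a d = while_nz a [Inc d]"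
definition copy_reg :: "nat \<Rightarrow> nat \<Rightarrow> nat \<Rightarrow> instr list" where
  "copy_reg a d t = while_nz a ([Inc d] \<bullet> [Inc t]) \<bullet> move_reg t a"

lemma reaches_clear_reg:
  assumes "r \<noteq> 1" "s 1 = 0"
  shows "reaches (clear_reg r) s (s(r := 0))"
proof -
  let ?S = "\<lambda>i. s(r := s r - i)"
  have "reaches (while_nz r []) (?S 0) (?S (s r))"
  proof (rule reaches_while_nz)
    fix i assume i: "i < s r"
    have "(?S i)(r := ?S i r - 1) = ?S (Suc i)" by (intro ext) simp
    then show "?S i r \<noteq> 0 \<and> reaches [] ((?S i)(r := ?S i r - 1)) (?S (Suc i)) \<and> ?S (Suc i) 1 = 0"
      using i assms by simp
  qed simp
  then show ?thesis by (simp add: clear_reg_def)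
qed

lemma reaches_IncI: "s' = s(r := Suc (s r)) \<Longrightarrow> reaches [Inc r] s s'"
  using reaches_Inc by simp

lemma reaches_move_reg:
  assumes "a \<noteq> 1" "d \<noteq> 1" "a \<noteq> d" "s 1 = 0"
  shows "reaches (move_reg a d) s (s(a := 0, d := s d + s a))"
proof -
  let ?S = "\<lambda>i. s(a := s a - i, d := s d + i)"
  have "reaches (while_nz a [Inc d]) (?S 0) (?S (s a))"
  proof (rule reaches_while_nz)
    fix i assume i: "i < s a"
    have e: "((?S i)(a := ?S i a - 1))(d := Suc (((?S i)(a := ?S i a - 1)) d)) = ?S (Suc i)"
      using assms i by (intro ext) simp
    show "?S i a \<noteq> 0 \<and> reaches [Inc d] ((?S i)(a := ?S i a - 1)) (?S (Suc i)) \<and> ?S (Suc i) 1 = 0"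
      using assms i reaches_Inc[of d "(?S i)(a := ?S i a - 1)"] e by simp
  qed (use assms in simp)
  then show ?thesis using assms by (simp add: move_reg_def)
qed

lemma reaches_copy_reg:
  assumes "a \<noteq> 1" "d \<noteq> 1" "t \<noteq> 1" "a \<noteq> d" "a \<noteq> t" "d \<noteq> t" "s 1 = 0" "s t = 0"
  shows "reaches (copy_reg a d t) s (s(d := s d + s a))"
proof -
  let ?S = "\<lambda>i. s(a := s a - i, d := s d + i, t := i)"
  have "reaches (while_nz a ([Inc d] \<bullet> [Inc t])) (?S 0) (?S (s a))"
  proof (rule reaches_while_nz)
    fix i assume i: "i < s a"
    let ?X = "(?S i)(a := ?S i a - 1)"
    have r: "reaches ([Inc d] \<bullet> [Inc t]) ?X (?X(d := Suc (?X d), t := Suc ((?X(d := Suc (?X d))) t)))"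
      by (rule reaches_seq_prog[OF reaches_Inc reaches_Inc])
    have e: "?X(d := Suc (?X d), t := Suc ((?X(d := Suc (?X d))) t)) = ?S (Suc i)"
      using assms i by (intro ext) simp
    show "?S i a \<noteq> 0 \<and> reaches ([Inc d] \<bullet> [Inc t]) ?X (?S (Suc i)) \<and> ?S (Suc i) 1 = 0"
      using assms i r e by simp
  qed (use assms in simp)
  moreover have "?S 0 = s" using assms by (intro ext) simp
  moreover have "?S (s a) = s(a := 0, d := s d + s a, t := s a)" using assms by (intro ext) simp
  ultimately have 1: "reaches (while_nz a ([Inc d] \<bullet> [Inc t])) s (s(a := 0, d := s d + s a, t := s a))"
    by simp
  have 2: "reaches (move_reg t a) (s(a := 0, d := s d + s a, t := s a)) (s(d := s d + s a))"
  proof (rule reaches_eq[OF reaches_move_reg])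
    show "(s(a := 0, d := s d + s a, t := s a))(t := 0, a := (s(a := 0, d := s d + s a, t := s a)) a + (s(a := 0, d := s d + s a, t := s a)) t) = s(d := s d + s a)"
      using assms by (intro ext) simp
  qed (use assms in simp_all)
  show ?thesis unfolding copy_reg_def by (rule reaches_seq_prog[OF 1 2])
qed

definition clear_regs :: "nat list \<Rightarrow> instr list" where "clear_regs rs = foldr (\<lambda>r p. clear_reg r \<bullet> p) rs []"

lemma reaches_clear_regs:
  assumes "1 \<notin> set rs" "s 1 = 0"
  shows "reaches (clear_regs rs) s (\<lambda>r. if r \<in> set rs then 0 else s r)"
  using assms
proof (induction rs arbitrary: s)
  case Nil then show ?case by (simp add: clear_regs_def)
next
  case (Cons r rs)
  have 1: "reaches (clear_reg r) s (s(r := 0))" using Cons.prems by (intro reaches_clear_reg) auto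
  have 2: "reaches (clear_regs rs) (s(r:=0)) (\<lambda>x. if x \<in> set rs then 0 else (s(r:=0)) x)"
    using Cons by auto
  have e: "(\<lambda>x. if x \<in> set rs then 0 else (s(r:=0)) x) = (\<lambda>x. if x \<in> set (r # rs) then 0 else s x)"
    by (intro ext) simp
  show ?case using reaches_seq_prog[OF 1 2] e by (simp add: clear_regs_def)
qed

section \<open>Compiling partial recursive functions to counter programs\<close>

text \<open>\<open>compile g ins ou b\<close> reads the arguments of \<open>g\<close> from the registers \<open>ins\<close>, writes the
  result into the cleared register \<open>ou\<close> and uses the registers from \<open>b\<close> on as scratch space,
  which it leaves cleared.\<close>
function (sequential) compile :: "recf \<Rightarrow> nat list \<Rightarrow> nat \<Rightarrow> nat \<Rightarrow> instr list"
and compile_list :: "recf list \<Rightarrow> nat list \<Rightarrow> nat \<Rightarrow> nat \<Rightarrow> instr list" where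
  "compile Zr ins ou b = []"
| "compile Sc ins ou b = copy_reg (hd ins) ou b \<bullet> [Inc ou]"
| "compile (Id n k) ins ou b = copy_reg (ins ! k) ou b"
| "compile (Cn n f gs) ins ou b =
     compile_list gs ins b (b + length gs) \<bullet> compile f [b..<b + length gs] ou (b + length gs) \<bullet> clear_regs [b..<b + length gs]"
| "compile (Pr n f g) ins ou b =
     compile f (tl ins) b (b+5) \<bullet> copy_reg (hd ins) (b+2) (b+4) \<bullet>
     while_nz (b+2) (compile g ((b+1) # b # tl ins) (b+3) (b+5) \<bullet> clear_reg b \<bullet> move_reg (b+3) b \<bullet> [Inc (b+1)]) \<bullet>
     move_reg b ou \<bullet> clear_reg (b+1)"
| "compile (Mn n f) ins ou b = test_loop (compile f (b # ins) (b+1) (b+2)) (b+1) (clear_reg (b+1) \<bullet> [Inc b]) \<bullet> move_reg b ou"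
| "compile_list [] ins k B = []"
| "compile_list (g # gs) ins k B = compile g ins k B \<bullet> compile_list gs ins (Suc k) B"
  by pat_completeness auto
termination
  by (relation "measure (case_sum (\<lambda>(g,_). size g) (\<lambda>(gs,_). size_list size gs))") auto


definition compile_correct :: "recf \<Rightarrow> bool" where
  "compile_correct g \<longleftrightarrow> (\<forall>xs y ins ou b s. rec_eval g xs y \<longrightarrow> 1 \<notin> set ins \<longrightarrow> ou \<noteq> 1 \<longrightarrow> ou \<notin> set ins \<longrightarrow>
      (\<forall>r\<in>set ins. r < b) \<longrightarrow> ou < b \<longrightarrow> 1 < b \<longrightarrow> s 1 = 0 \<longrightarrow> s ou = 0 \<longrightarrow> (\<forall>r\<ge>b. s r = 0) \<longrightarrow>
      map s ins = xs \<longrightarrow> reaches (compile g ins ou b) s (s(ou := y)))"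

lemma compile_correctD:
  assumes "compile_correct g" "rec_eval g xs y" "1 \<notin> set ins" "ou \<noteq> 1" "ou \<notin> set ins"
      "\<forall>r\<in>set ins. r < b" "ou < b" "1 < b" "s 1 = 0" "s ou = 0" "\<forall>r\<ge>b. s r = 0"
      "map s ins = xs"
  shows "reaches (compile g ins ou b) s (s(ou := y))"
  using assms unfolding compile_correct_def by blast

lemma compile_correctI:
  assumes "\<And>xs y ins ou b s. rec_eval g xs y \<Longrightarrow> 1 \<notin> set ins \<Longrightarrow> ou \<noteq> 1 \<Longrightarrow> ou \<notin> set ins \<Longrightarrow>
      (\<forall>r\<in>set ins. r < b) \<Longrightarrow> ou < b \<Longrightarrow> 1 < b \<Longrightarrow> s 1 = 0 \<Longrightarrow> s ou = 0 \<Longrightarrow> (\<forall>r\<ge>b. s r = 0) \<Longrightarrow>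
      map s ins = xs \<Longrightarrow> reaches (compile g ins ou b) s (s(ou := y))"
  shows "compile_correct g"
  using assms unfolding compile_correct_def by blast

inductive_cases ev_ZrE: "rec_eval Zr xs y"
inductive_cases ev_ScE: "rec_eval Sc xs y"
inductive_cases ev_IdE: "rec_eval (Id n k) xs y"
inductive_cases ev_CnE: "rec_eval (Cn n f gs) xs y"
inductive_cases ev_PrE: "rec_eval (Pr n f g) xs y"
inductive_cases ev_MnE: "rec_eval (Mn n f) xs y"

lemma compile_correct_Zr: "compile_correct Zr"
proof (rule compile_correctI)
  fix xs y ins and ou b :: nat and s :: regs
  assume "rec_eval Zr xs y" "s ou = 0"
  then show "reaches (compile Zr ins ou b) s (s(ou := y))"
    by (auto elim: ev_ZrE simp: fun_upd_idem)
qed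

lemma compile_correct_Sc: "compile_correct Sc"
proof (rule compile_correctI)
  fix xs y ins and ou b :: nat and s :: regs
  assume ev: "rec_eval Sc xs y" and h: "1 \<notin> set ins" "ou \<noteq> 1" "ou \<notin> set ins"
      "\<forall>r\<in>set ins. r < b" "ou < b" "1 < b" "s 1 = 0" "s ou = 0" "\<forall>r\<ge>b. s r = 0"
      "map s ins = xs"
  from ev obtain x where xs: "xs = [x]" and y: "y = Suc x" by (auto elim: ev_ScE)
  then obtain r where ins: "ins = [r]" and sr: "s r = x" using h(10) by (cases ins) auto
  have sb: "s b = 0" using h(9) by simp
  have 1: "reaches (copy_reg r ou b) s (s(ou := s ou + s r))"
    by (rule reaches_copy_reg) (use h ins sb in auto)
  have 2: "reaches [Inc ou] (s(ou := s ou + s r)) (s(ou := y))"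
    by (rule reaches_IncI) (use h sr y in simp)
  show "reaches (compile Sc ins ou b) s (s(ou := y))"
    using reaches_seq_prog[OF 1 2] ins by simp
qed

lemma compile_correct_Id: "compile_correct (Id n k)"
proof (rule compile_correctI)
  fix xs y ins and ou b :: nat and s :: regs
  assume ev: "rec_eval (Id n k) xs y" and h: "1 \<notin> set ins" "ou \<noteq> 1" "ou \<notin> set ins"
      "\<forall>r\<in>set ins. r < b" "ou < b" "1 < b" "s 1 = 0" "s ou = 0" "\<forall>r\<ge>b. s r = 0"
      "map s ins = xs"
  from ev have k: "k < length xs" and y: "y = xs ! k" by (auto elim: ev_IdE)
  have kl: "k < length ins" using k h(10) by auto
  have mem: "ins ! k \<in> set ins" using kl by simp
  have sb: "s b = 0" using h(9) by simp
  have 1: "reaches (copy_reg (ins ! k) ou b) s (s(ou := s ou + s (ins ! k)))"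
    by (rule reaches_copy_reg) (use h mem sb in \<open>auto\<close>)
  have "s (ins ! k) = y" using y h(10) kl by auto
  then show "reaches (compile (Id n k) ins ou b) s (s(ou := y))" using 1 h by simp
qed

definition set_regs :: "regs \<Rightarrow> nat \<Rightarrow> nat list \<Rightarrow> regs" where
  "set_regs s k ys = (\<lambda>r. if k \<le> r \<and> r < k + length ys then ys ! (r - k) else s r)"

lemma reaches_compile_list:
  assumes "list_all2 (\<lambda>g y. rec_eval g xs y) gs ys" "\<forall>g\<in>set gs. compile_correct g"
    "1 \<notin> set ins" "\<forall>r\<in>set ins. r < k" "1 < k" "k + length gs \<le> B" "s 1 = 0" "\<forall>r\<ge>k. s r = 0"
    "map s ins = xs"
  shows "reaches (compile_list gs ins k B) s (set_regs s k ys)"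
  using assms
proof (induction gs ys arbitrary: s k rule: list_all2_induct)
  case Nil
  have "set_regs s k [] = s" by (intro ext) (simp add: set_regs_def)
  then show ?case by simp
next
  case (Cons g gs y ys)
  have sk: "s k = 0" using Cons.prems(7) by simp
  have kin: "k \<notin> set ins" using Cons.prems(3) by auto
  have 1: "reaches (compile g ins k B) s (s(k := y))"
  proof (rule compile_correctD[where xs=xs])
    show "compile_correct g" using Cons.prems(1) by simp
    show "\<forall>r\<in>set ins. r < B" using Cons.prems(3,5) by force
  qed (use Cons sk kin in auto)
  have 2: "reaches (compile_list gs ins (Suc k) B) (s(k := y)) (set_regs (s(k := y)) (Suc k) ys)"
  proof (rule Cons.IH)
    show "map (s(k := y)) ins = xs" using Cons.prems(8) kin by (auto intro: map_idI)
  qed (use Cons.prems in auto)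
  have e: "set_regs (s(k := y)) (Suc k) ys = set_regs s k (y # ys)"
  proof (intro ext)
    fix r
    show "set_regs (s(k := y)) (Suc k) ys r = set_regs s k (y # ys) r"
      by (cases "r < k"; cases "r = k") (auto simp: set_regs_def nth_Cons')
  qed
  show ?case using reaches_seq_prog[OF 1 2] e by simp
qed

lemma compile_correct_Cn:
  assumes okf: "compile_correct f" and okg: "\<forall>g\<in>set gs. compile_correct g"
  shows "compile_correct (Cn n f gs)"
proof (rule compile_correctI)
  fix xs z ins and ou b :: nat and s :: regs
  assume ev: "rec_eval (Cn n f gs) xs z" and h: "1 \<notin> set ins" "ou \<noteq> 1" "ou \<notin> set ins"
      "\<forall>r\<in>set ins. r < b" "ou < b" "1 < b" "s 1 = 0" "s ou = 0" "\<forall>r\<ge>b. s r = 0"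
      "map s ins = xs"
  from ev obtain ys where la: "list_all2 (\<lambda>g y. rec_eval g xs y) gs ys" and evf: "rec_eval f ys z"
    by (auto elim: ev_CnE)
  define B where "B = b + length gs"
  have ly: "length ys = length gs" using la by (simp add: list_all2_lengthD)
  define s' where "s' = set_regs s b ys"
  have 1: "reaches (compile_list gs ins b B) s s'"
    unfolding s'_def by (rule reaches_compile_list[OF la okg]) (use h B_def in auto)
  have s'o: "s' ou = 0" using h by (simp add: s'_def set_regs_def)
  have s'1: "s' 1 = 0" unfolding s'_def set_regs_def using h(6,7) by simp
  have s'B: "\<forall>r\<ge>B. s' r = 0" using h ly by (simp add: s'_def set_regs_def B_def)
  have mp: "map s' [b..<B] = ys"
    by (rule nth_equalityI) (auto simp: s'_def set_regs_def B_def ly)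
  have 2: "reaches (compile f [b..<B] ou B) s' (s'(ou := z))"
    by (rule compile_correctD[OF okf evf]) (use h s'o s'1 s'B mp B_def in auto)
  have 3: "reaches (clear_regs [b..<B]) (s'(ou := z)) (\<lambda>r. if r \<in> set [b..<B] then 0 else (s'(ou := z)) r)"
    by (rule reaches_clear_regs) (use h s'1 in auto)
  have e: "(\<lambda>r. if r \<in> set [b..<B] then 0 else (s'(ou := z)) r) = s(ou := z)"
  proof (intro ext)
    fix r show "(if r \<in> set [b..<B] then 0 else (s'(ou := z)) r) = (s(ou := z)) r"
      using h by (auto simp: s'_def set_regs_def B_def ly)
  qed
  show "reaches (compile (Cn n f gs) ins ou b) s (s(ou := z))"
    using reaches_seq_prog[OF 1 reaches_seq_prog[OF 2 3]] e B_def by simp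
qed

lemma rec_eval_Pr_chain:
  "rec_eval (Pr n f g) (x # xs) y \<Longrightarrow>
    \<exists>P. P x = y \<and> rec_eval f xs (P 0) \<and> (\<forall>j<x. rec_eval g (j # P j # xs) (P (Suc j)))"
proof (induction x arbitrary: y)
  case 0
  then have "rec_eval f xs y" by (auto elim: ev_PrE)
  then show ?case by (intro exI[of _ "\<lambda>_. y"]) auto
next
  case (Suc x)
  from Suc.prems obtain y' where a: "rec_eval (Pr n f g) (x # xs) y'" and b: "rec_eval g (x # y' # xs) y"
    by (auto elim: ev_PrE)
  from Suc.IH[OF a] obtain P where P: "P x = y'" "rec_eval f xs (P 0)"
    "\<forall>j<x. rec_eval g (j # P j # xs) (P (Suc j))" by blast
  show ?case
  proof (intro exI[of _ "P(Suc x := y)"] conjI allI impI)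
    fix j assume "j < Suc x"
    then show "rec_eval g (j # (P(Suc x := y)) j # xs) ((P(Suc x := y)) (Suc j))"
      using P b by (cases "j = x") auto
  qed (use P in auto)
qed

lemma reaches_Pr_step:
  assumes okg: "compile_correct g" and ev: "rec_eval g (j # y # map s ins) y'"
    and ins: "1 \<notin> set ins" "\<forall>q\<in>set ins. q < b" "1 < b"
    and s: "s 1 = 0" "\<forall>q\<ge>b. s q = 0"
  shows "reaches (compile g ((b+1) # b # ins) (b+3) (b+5) \<bullet> clear_reg b \<bullet> move_reg (b+3) b \<bullet> [Inc (b+1)])
           (s(b := y, b+1 := j, b+2 := c)) (s(b := y', b+1 := Suc j, b+2 := c))"
proof -
  define X where "X = s(b := y, b+1 := j, b+2 := c)"
  have "map X ins = map s ins" using ins(2) by (intro map_cong) (auto simp: X_def)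
  then have mapX: "map X ((b+1) # b # ins) = j # y # map s ins" by (simp add: X_def)
  have G: "reaches (compile g ((b+1) # b # ins) (b+3) (b+5)) X (X(b+3 := y'))"
    by (rule compile_correctD[OF okg ev[folded mapX]]) (use ins s in \<open>auto simp: X_def\<close>)
  have C: "reaches (clear_reg b) (X(b+3 := y')) (X(b+3 := y', b := 0))"
    by (rule reaches_clear_reg) (use ins s in \<open>auto simp: X_def\<close>)
  have M: "reaches (move_reg (b+3) b) (X(b+3 := y', b := 0)) (X(b := y'))"
  proof (rule reaches_eq[OF reaches_move_reg])
    show "(X(b+3 := y', b := 0))(b+3 := 0, b := (X(b+3 := y', b := 0)) b + (X(b+3 := y', b := 0)) (b+3)) =
        X(b := y')"
      using s by (intro ext) (simp add: X_def)
  qed (use ins s in \<open>auto simp: X_def\<close>)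
  have I: "reaches [Inc (b+1)] (X(b := y')) (s(b := y', b+1 := Suc j, b+2 := c))"
    by (rule reaches_IncI) (intro ext, simp add: X_def)
  show ?thesis
    using reaches_seq_prog[OF G reaches_seq_prog[OF C reaches_seq_prog[OF M I]]] by (simp add: X_def)
qed

lemma reaches_Pr_loop:
  assumes okg: "compile_correct g" and chain: "\<forall>j<x. rec_eval g (j # P j # map s ins) (P (Suc j))"
    and ins: "1 \<notin> set ins" "\<forall>q\<in>set ins. q < b" "1 < b"
    and s: "s 1 = 0" "\<forall>q\<ge>b. s q = 0"
  shows "reaches (while_nz (b+2) (compile g ((b+1) # b # ins) (b+3) (b+5) \<bullet> clear_reg b \<bullet> move_reg (b+3) b \<bullet> [Inc (b+1)]))
           (s(b := P 0, b+1 := 0, b+2 := x)) (s(b := P x, b+1 := x, b+2 := 0))"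
proof -
  define S where "S j = s(b := P j, b+1 := j, b+2 := x - j)" for j
  have "reaches (while_nz (b+2) (compile g ((b+1) # b # ins) (b+3) (b+5) \<bullet> clear_reg b \<bullet> move_reg (b+3) b \<bullet> [Inc (b+1)]))
      (S 0) (S x)"
  proof (rule reaches_while_nz)
    fix j assume j: "j < x"
    have "(S j)(b+2 := S j (b+2) - 1) = s(b := P j, b+1 := j, b+2 := x - Suc j)"
      by (intro ext) (simp add: S_def)
    moreover have "S (Suc j) = s(b := P (Suc j), b+1 := Suc j, b+2 := x - Suc j)"
      by (simp add: S_def)
    ultimately show "S j (b+2) \<noteq> 0 \<and> reaches (compile g ((b+1) # b # ins) (b+3) (b+5) \<bullet> clear_reg b \<bullet> move_reg (b+3) b \<bullet> [Inc (b+1)])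
        ((S j)(b+2 := S j (b+2) - 1)) (S (Suc j)) \<and> S (Suc j) 1 = 0"
      using j reaches_Pr_step[OF okg chain[rule_format, OF j] ins s] s ins(3) by (simp add: S_def)
  qed (simp add: S_def)
  then show ?thesis by (simp add: S_def)
qed

lemma compile_correct_Pr:
  assumes okf: "compile_correct f" and okg: "compile_correct g"
  shows "compile_correct (Pr n f g)"
proof (rule compile_correctI)
  fix xs y ins and ou b :: nat and s :: regs
  assume ev: "rec_eval (Pr n f g) xs y" and h: "1 \<notin> set ins" "ou \<noteq> 1" "ou \<notin> set ins"
      "\<forall>r\<in>set ins. r < b" "ou < b" "1 < b" "s 1 = 0" "s ou = 0" "\<forall>r\<ge>b. s r = 0"
      "map s ins = xs"
  from ev obtain x xs' where xs: "xs = x # xs'" by (auto elim: ev_PrE)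
  with h(10) obtain r ins' where ins: "ins = r # ins'" and sr: "s r = x" and mp: "map s ins' = xs'"
    by (cases ins) auto
  from rec_eval_Pr_chain[OF ev[unfolded xs]] obtain P where P: "P x = y" "rec_eval f xs' (P 0)"
    "\<forall>j<x. rec_eval g (j # P j # xs') (P (Suc j))" by blast
  have z: "s b = 0" "s (b+1) = 0" "s (b+2) = 0" "s (b+3) = 0" "s (b+4) = 0" "\<forall>q\<ge>b+5. s q = 0"
    using h(9) by auto
  have rb: "r < b" "\<forall>q\<in>set ins'. q < b" "1 \<notin> set ins'" "r \<noteq> 1" using h(1,4) ins by auto
  have R1: "reaches (compile f ins' b (b+5)) s (s(b := P 0))"
    by (rule compile_correctD[OF okf P(2)]) (use h z rb mp in auto)
  have R2: "reaches (copy_reg r (b+2) (b+4)) (s(b := P 0)) (s(b := P 0, b+1 := 0, b+2 := x))"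
  proof (rule reaches_eq[OF reaches_copy_reg])
    show "(s(b := P 0))(b+2 := (s(b := P 0)) (b+2) + (s(b := P 0)) r) = s(b := P 0, b+1 := 0, b+2 := x)"
      using rb z sr by (intro ext) simp
  qed (use rb h z in auto)
  have R3: "reaches (while_nz (b+2) (compile g ((b+1) # b # ins') (b+3) (b+5) \<bullet> clear_reg b \<bullet> move_reg (b+3) b \<bullet> [Inc (b+1)]))
           (s(b := P 0, b+1 := 0, b+2 := x)) (s(b := P x, b+1 := x, b+2 := 0))"
    by (rule reaches_Pr_loop[OF okg]) (use P(3) mp rb h in auto)
  have R4: "reaches (move_reg b ou) (s(b := P x, b+1 := x, b+2 := 0)) (s(ou := y, b+1 := x))"
  proof (rule reaches_eq[OF reaches_move_reg])
    show "(s(b := P x, b+1 := x, b+2 := 0))(b := 0, ou := (s(b := P x, b+1 := x, b+2 := 0)) ou + (s(b := P x, b+1 := x, b+2 := 0)) b) =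
        s(ou := y, b+1 := x)"
      using h z P(1) by (intro ext) auto
  qed (use h z in auto)
  have R5: "reaches (clear_reg (b+1)) (s(ou := y, b+1 := x)) (s(ou := y))"
  proof (rule reaches_eq[OF reaches_clear_reg])
    show "(s(ou := y, b+1 := x))(b+1 := 0) = s(ou := y)"
      using h z by (intro ext) auto
  qed (use h in auto)
  show "reaches (compile (Pr n f g) ins ou b) s (s(ou := y))"
    using reaches_seq_prog[OF R1 reaches_seq_prog[OF R2 reaches_seq_prog[OF R3 reaches_seq_prog[OF R4 R5]]]] ins by simp
qed

lemma compile_correct_Mn:
  assumes okf: "compile_correct f"
  shows "compile_correct (Mn n f)"
proof (rule compile_correctI)
  fix xs r ins and ou b :: nat and s :: regs
  assume ev: "rec_eval (Mn n f) xs r" and h: "1 \<notin> set ins" "ou \<noteq> 1" "ou \<notin> set ins"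
      "\<forall>r\<in>set ins. r < b" "ou < b" "1 < b" "s 1 = 0" "s ou = 0" "\<forall>r\<ge>b. s r = 0"
      "map s ins = xs"
  from ev have f0: "rec_eval f (r # xs) 0" and fi: "\<forall>i<r. \<exists>y. rec_eval f (i # xs) y \<and> y \<noteq> 0"
    by (auto elim: ev_MnE)
  define Y where "Y = (\<lambda>i. if i < r then (SOME y. rec_eval f (i # xs) y \<and> y \<noteq> 0) else 0)"
  have Y: "i < r \<Longrightarrow> rec_eval f (i # xs) (Y i) \<and> Y i \<noteq> 0" for i
  proof -
    assume i: "i < r"
    have "\<exists>y. rec_eval f (i # xs) y \<and> y \<noteq> 0" using fi i by blast
    from someI_ex[OF this] show ?thesis using i unfolding Y_def by simp
  qed
  have Yr: "rec_eval f (r # xs) (Y r)" using f0 by (simp add: Y_def)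
  have z: "s b = 0" "s (b+1) = 0" "\<forall>q\<ge>b+2. s q = 0" using h(9) by auto
  define S where "S = (\<lambda>i. s(b := i))"
  define X where "X = (\<lambda>i. s(b := i, b+1 := Y i))"
  have B1: "reaches (compile f (b # ins) (b+1) (b+2)) (S i) (X i)" if "rec_eval f (i # xs) (Y i)" for i
  proof (rule reaches_eq[OF compile_correctD[OF okf]])
    show "rec_eval f (map (S i) (b # ins)) (Y i)"
    proof -
      have "map (S i) ins = map s ins" using h(4) by (intro map_cong) (auto simp: S_def)
      then show ?thesis using that h(10) by (simp add: S_def)
    qed
  qed (use h z in \<open>auto simp: S_def X_def\<close>)
  have "reaches (test_loop (compile f (b # ins) (b+1) (b+2)) (b+1) (clear_reg (b+1) \<bullet> [Inc b])) (S 0) (X r)"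
  proof (rule reaches_test_loop)
    fix i assume i: "i < r"
    have C: "reaches (clear_reg (b+1)) ((X i)(b+1 := X i (b+1) - 1)) (S i)"
    proof (rule reaches_eq[OF reaches_clear_reg])
      show "((X i)(b+1 := X i (b+1) - 1))(b+1 := 0) = S i" using z by (intro ext) (simp add: X_def S_def)
    qed (use h in \<open>auto simp: X_def\<close>)
    have I: "reaches [Inc b] (S i) (S (Suc i))"
      by (rule reaches_IncI) (intro ext, simp add: S_def)
    show "X i (b+1) \<noteq> 0 \<and> reaches (compile f (b # ins) (b+1) (b+2)) (S i) (X i) \<and>
        reaches (clear_reg (b+1) \<bullet> [Inc b]) ((X i)(b+1 := X i (b+1) - 1)) (S (Suc i)) \<and> S (Suc i) 1 = 0"
      using Y[OF i] B1 reaches_seq_prog[OF C I] h by (simp add: X_def S_def)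
  next
    show "reaches (compile f (b # ins) (b+1) (b+2)) (S r) (X r)" using B1[OF Yr] .
    show "X r (b+1) = 0" by (simp add: X_def Y_def)
  qed
  moreover have "S 0 = s" using z by (intro ext) (simp add: S_def)
  moreover have "reaches (move_reg b ou) (X r) (s(ou := r))"
  proof (rule reaches_eq[OF reaches_move_reg])
    show "(X r)(b := 0, ou := X r ou + X r b) = s(ou := r)"
      using h z by (intro ext) (auto simp: X_def Y_def)
  qed (use h in \<open>auto simp: X_def\<close>)
  ultimately show "reaches (compile (Mn n f) ins ou b) s (s(ou := r))"
    by (simp add: reaches_seq_prog)
qed

lemma compile_correct_all: "compile_correct g"
proof (induction g)
  case Zr then show ?case by (rule compile_correct_Zr)
next
  case Sc then show ?case by (rule compile_correct_Sc)
next
  case (Id n k) then show ?case by (rule compile_correct_Id)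
next
  case (Cn n f gs) then show ?case by (intro compile_correct_Cn) auto
next
  case (Pr n f g) then show ?case by (intro compile_correct_Pr) auto
next
  case (Mn n f) then show ?case by (intro compile_correct_Mn) auto
qed


section \<open>Unique decoding of codes and determinism\<close>

lemma replicate_EndN_inj: "replicate k One1 @ EndN # x = replicate k' One1 @ EndN # y \<Longrightarrow> k = k' \<and> x = y"
proof (induction k arbitrary: k')
  case 0 then show ?case by (cases k') auto
next
  case (Suc k) then show ?case by (cases k') auto
qed

lemma enc_state_prefix_inj: "enc_state p @ x = enc_state p' @ y \<Longrightarrow> p = p' \<and> x = y"
proof -
  assume h: "enc_state p @ x = enc_state p' @ y"
  obtain k r where p: "p = (k, r)" by (cases p)
  obtain k' r' where p': "p' = (k', r')" by (cases p')
  from h have "(if r then SR else ST) = (if r' then SR else ST)" and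
    t: "replicate k One1 @ EndN # x = replicate k' One1 @ EndN # y" by (auto simp: p p')
  then have "r = r'" by (auto split: if_splits)
  with replicate_EndN_inj[OF t] show ?thesis by (simp add: p p')
qed

lemma enc_move_inj: "enc_move d = enc_move d' \<Longrightarrow> d = d'"
  by (cases d; cases d') auto

lemma enc_tuple_prefix_inj: "enc_tuple t @ x = enc_tuple t' @ y \<Longrightarrow> t = t' \<and> x = y"
proof -
  assume h: "enc_tuple t @ x = enc_tuple t' @ y"
  obtain p a q b d where t: "t = (p, a, q, b, d)" by (cases t) auto
  obtain p' a' q' b' d' where t': "t' = (p', a', q', b', d')" by (cases t') auto
  from h have "enc_state p @ (a # enc_state q @ b # enc_move d # x) = enc_state p' @ (a' # enc_state q' @ b' # enc_move d' # y)"
    by (simp add: t t')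
  from enc_state_prefix_inj[OF this] have 1: "p = p'" "a = a'" and
    "enc_state q @ (b # enc_move d # x) = enc_state q' @ (b' # enc_move d' # y)" by auto
  from enc_state_prefix_inj[OF this(3)] have "q = q'" "b = b'" "enc_move d = enc_move d'" "x = y" by auto
  with 1 enc_move_inj show ?thesis by (simp add: t t')
qed

lemma enc_tuple_ne: "enc_tuple t \<noteq> []"
  by (cases t) auto

lemma concat_enc_tuple_inj: "concat (map enc_tuple ts) = concat (map enc_tuple ts') \<Longrightarrow> ts = ts'"
proof (induction ts arbitrary: ts')
  case Nil then show ?case by (cases ts') (auto simp: enc_tuple_ne)
next
  case (Cons t ts)
  show ?case
  proof (cases ts')
    case Nil then show ?thesis using Cons.prems enc_tuple_ne by auto
  next
    case (Cons t' ts'')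
    with Cons.prems have "enc_tuple t @ concat (map enc_tuple ts) = enc_tuple t' @ concat (map enc_tuple ts'')" by simp
    from enc_tuple_prefix_inj[OF this] Cons.IH Cons show ?thesis by auto
  qed
qed

lemma has_tuple_functional:
  assumes "proper_code w" "has_tuple w (p, a, q, b, d)" "has_tuple w (p, a, q', b', d')"
  shows "q = q' \<and> b = b' \<and> d = d'"
proof -
  from assms(1) obtain ts where ts: "w = concat (map enc_tuple ts)" "functional_tuples ts"
    by (auto simp: proper_code_def)
  from assms(2) obtain ts1 where 1: "w = concat (map enc_tuple ts1)" "(p, a, q, b, d) \<in> set ts1"
    by (auto simp: has_tuple_def)
  from assms(3) obtain ts2 where 2: "w = concat (map enc_tuple ts2)" "(p, a, q', b', d') \<in> set ts2"
    by (auto simp: has_tuple_def)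
  have "ts1 = ts" "ts2 = ts" using concat_enc_tuple_inj ts(1) 1(1) 2(1) by metis+
  with 1 2 ts(2) show ?thesis unfolding functional_tuples_def by fastforce
qed

lemma step_det: "proper_code w \<Longrightarrow> step w c c1 \<Longrightarrow> step w c c2 \<Longrightarrow> c1 = c2"
  unfolding step_def
  by (auto split: prod.splits if_splits dest: has_tuple_functional)

lemma rtranclp_deterministic_comparable:
  assumes det: "\<forall>x y z. R x y \<longrightarrow> R x z \<longrightarrow> y = z"
  shows "R\<^sup>*\<^sup>* a b \<Longrightarrow> R\<^sup>*\<^sup>* a c \<Longrightarrow> R\<^sup>*\<^sup>* b c \<or> R\<^sup>*\<^sup>* c b"
proof (induction arbitrary: c rule: converse_rtranclp_induct)
  case base then show ?case by simp
next
  case (step a a')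
  from step.prems show ?case
  proof (cases rule: converse_rtranclpE)
    case base then show ?thesis using step.hyps(1,2) by (meson converse_rtranclp_into_rtranclp)
  next
    case (step a'')
    with det \<open>R a a'\<close> have "a'' = a'" by blast
    with step.IH step show ?thesis by blast
  qed
qed

lemma first_q1_unique:
  assumes pc: "proper_code w"
    and p1: "(step_nq w)\<^sup>*\<^sup>* c0 c1" "step w c1 (q1, i1, o1)"
    and p2: "(step_nq w)\<^sup>*\<^sup>* c0 c2" "step w c2 (q1, i2, o2)"
  shows "o2 = o1"
proof -
  have det: "\<forall>x y z. step_nq w x y \<longrightarrow> step_nq w x z \<longrightarrow> y = z"
    unfolding step_nq_def using step_det[OF pc] by blast
  have key: "c = c'" if "(step_nq w)\<^sup>*\<^sup>* c c'" "step w c (q1, i, o')" for c c' i o'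
    using that(1)
  proof (cases rule: converse_rtranclpE)
    case (step y)
    then have "step w c y" "fst y \<noteq> q1" by (auto simp: step_nq_def)
    from step_det[OF pc that(2) this(1)] this(2) show ?thesis by auto
  qed simp
  from rtranclp_deterministic_comparable[of "step_nq w", OF det p1(1) p2(1)] have "c1 = c2"
    using key p1(2) p2(2) by metis
  with step_det[OF pc p1(2)] p2(2) have "(q1, i1, o1) = (q1, i2, o2)" by simp
  then show ?thesis by simp
qed

lemma stuck_no_q1:
  assumes pc: "proper_code w"
    and p1: "(step_nq w)\<^sup>*\<^sup>* c0 c1" "\<And>c'. \<not> step w c1 c'"
    and p2: "(step_nq w)\<^sup>*\<^sup>* c0 c2" "step w c2 (q1, i2, o2)"
  shows False
proof -
  have det: "\<forall>x y z. step_nq w x y \<longrightarrow> step_nq w x z \<longrightarrow> y = z"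
    unfolding step_nq_def using step_det[OF pc] by blast
  from rtranclp_deterministic_comparable[of "step_nq w", OF det p1(1) p2(1)] show False
  proof
    assume "(step_nq w)\<^sup>*\<^sup>* c1 c2"
    then show False
    proof (cases rule: converse_rtranclpE)
      case base then show False using p1(2) p2(2) by blast
    next
      case (step y) then show False using p1(2) by (auto simp: step_nq_def)
    qed
  next
    assume "(step_nq w)\<^sup>*\<^sup>* c2 c1"
    then show False
    proof (cases rule: converse_rtranclpE)
      case base then show False using p1(2) p2(2) by blast
    next
      case (step y)
      then have "step w c2 y" "fst y \<noteq> q1" by (auto simp: step_nq_def)
      from step_det[OF pc p2(2) this(1)] this(2) show False by auto
    qed
  qed
qed

section \<open>A self-replicating simulator of counter programs\<close>

text \<open>Control states of the reproducing phase, each family indexed by the program counter: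
  \<open>LI\<close>, \<open>F1\<close>--\<open>F7\<close> copy the leading tuple; \<open>RA\<close>, \<open>RK\<close>, \<open>RC\<close> copy the register tuple
  \<open>j\<close> (the flag records whether the tested register was zero), with \<open>IK\<close>--\<open>IV\<close> and
  \<open>D1\<close>--\<open>D4\<close> incrementing and decrementing the active register; \<open>H1\<close>--\<open>H4\<close>, \<open>LG\<close>
  copy the padding tuple and rewrite the start tuple; the program-independent \<open>C\<close>
  states copy the control tuples verbatim and \<open>E2\<close>--\<open>E6\<close> copy the final tuple and split.\<close>
datatype ctrl = LI nat | F1 nat | F2 nat | F3 nat | F4 nat | F5 nat | F6 nat | F7 nat
  | RA nat nat bool | RK nat nat bool | RC nat nat bool | IK nat | IE nat | IZ nat | IV nat
  | D1 nat | D2 nat | D3 nat | D4 nat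
  | H1 nat bool | H2 nat bool | H3 nat bool | H4 nat bool | LG nat bool nat
  | C0 | C1f | C1 | C2 | C3 | C4 | C5 | C6 | E2 | E3 | E4 | E5 | E6

instance ctrl :: countable by countable_datatype

definition cstate :: "ctrl \<Rightarrow> state" where "cstate l = (Suc (to_nat l), True)"

lemma cstate_inj[simp]: "cstate l = cstate l' \<longleftrightarrow> l = l'"
  by (auto simp: cstate_def)

lemma cstate_simps[simp]: "cstate l \<noteq> q1" "cstate l \<noteq> q0" "snd (cstate l)"
  by (auto simp: cstate_def q0_def q1_def)

fun areg :: "instr \<Rightarrow> nat" where "areg (Inc r) = r" | "areg (Dec r j) = r"
fun isDec :: "instr \<Rightarrow> bool" where "isDec (Inc r) = False" | "isDec (Dec r j) = True"

definition read_syms :: "sym list" where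
  "read_syms = [Z, One1, SR, ST, EndN, MvL, MvN, MvR, LEnd, REnd]"

lemma in_read_syms[simp]: "a \<in> set read_syms \<longleftrightarrow> a \<noteq> Blank"
  by (cases a) (auto simp: read_syms_def)

text \<open>Tuples leaving \<open>q1\<close> are never executed, and the register tuples
  leave transducer states that are never entered. Since each step writes at most one symbol,
  the copy lags behind the original: the indices of the leading, register and padding tuples
  grow in every generation and absorb these length differences.\<close>
definition gen_tuple :: "nat \<Rightarrow> tuple" where "gen_tuple n = (q1, Z, (n, False), Z, Stay)"
definition pad_tuple :: "nat \<Rightarrow> tuple" where "pad_tuple n = (q1, One1, (n, False), Z, Stay)"
definition end_tuple :: tuple where "end_tuple = (q1, EndN, q1, Z, Stay)"
definition start_tuple :: "nat \<Rightarrow> tuple" where "start_tuple p = (q0, Z, cstate (LI p), Z, Stay)"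
definition reg_tuple :: "nat \<Rightarrow> regs \<Rightarrow> nat \<Rightarrow> tuple" where
  "reg_tuple t s j = ((Suc j + t, False), Z, (s j, False), Z, Stay)"



definition on_tape :: "sym list \<Rightarrow> nat \<Rightarrow> sym list \<Rightarrow> bool" where
  "on_tape w i u \<longleftrightarrow> i + length u < length (tape w) \<and> (\<forall>k<length u. tape w ! (i+k) = u ! k)"

lemma on_tape_append: "on_tape w i (u @ v) \<longleftrightarrow> on_tape w i u \<and> on_tape w (i + length u) v"
proof
  assume h: "on_tape w i (u @ v)"
  have a: "tape w ! (i + k) = (u @ v) ! k" if "k < length u + length v" for k
    using h that unfolding on_tape_def by simp
  show "on_tape w i u \<and> on_tape w (i + length u) v"
    unfolding on_tape_def
  proof (intro conjI allI impI)
    show "i + length u < length (tape w)" using h unfolding on_tape_def by simp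
    show "i + length u + length v < length (tape w)" using h unfolding on_tape_def by simp
    fix k
    show "k < length u \<Longrightarrow> tape w ! (i + k) = u ! k" using a[of k] by (simp add: nth_append)
    show "k < length v \<Longrightarrow> tape w ! (i + length u + k) = v ! k" using a[of "length u + k"]
      by (simp add: nth_append add.assoc)
  qed
next
  assume h: "on_tape w i u \<and> on_tape w (i + length u) v"
  show "on_tape w i (u @ v)"
    unfolding on_tape_def
  proof (intro conjI allI impI)
    show "i + length (u @ v) < length (tape w)" using h unfolding on_tape_def by simp
    fix k assume k: "k < length (u @ v)"
    show "tape w ! (i + k) = (u @ v) ! k"
    proof (cases "k < length u")
      case True then show ?thesis using h unfolding on_tape_def by (simp add: nth_append)
    next
      case False
      then obtain m where m: "k = length u + m" by (metis le_add_diff_inverse not_less)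
      then have "m < length v" using k by simp
      then show ?thesis using h m unfolding on_tape_def by (simp add: nth_append add.assoc)
    qed
  qed
qed

lemma on_tape_Cons: "on_tape w i (a # v) \<longleftrightarrow> on_tape w i [a] \<and> on_tape w (Suc i) v"
  using on_tape_append[of w i "[a]" v] by simp

lemma on_tape_code: "on_tape w (Suc 0) w"
  unfolding on_tape_def tape_def by (auto simp: nth_append)

lemma on_tape_LEnd: "on_tape w 0 [LEnd]"
  unfolding on_tape_def tape_def by auto

definition runs :: "sym list \<Rightarrow> state \<Rightarrow> nat \<Rightarrow> sym list \<Rightarrow> state \<Rightarrow> sym list \<Rightarrow> sym list \<Rightarrow> bool" where
  "runs w q i u q' o1 o2 \<longleftrightarrow> (step_nq w)\<^sup>*\<^sup>* (q, i, o1) (q', i + length u, o2)"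

lemma runs_append: "runs w q i u q' o1 o2 \<Longrightarrow> runs w q' (i + length u) v q'' o2 o3 \<Longrightarrow> runs w q i (u @ v) q'' o1 o3"
  unfolding runs_def by (simp add: add.assoc)

lemma on_tape_nth: "on_tape w i [a] \<Longrightarrow> tape w ! i = a \<and> Suc i < length (tape w)"
  unfolding on_tape_def by auto

lemma runs_Rgt:
  assumes "on_tape w i [a]" "has_tuple w (q, a, q', b, Rgt)" "snd q" "q' \<noteq> q1" "b \<noteq> Blank"
  shows "runs w q i [a] q' out (out @ [b])"
proof -
  have mh: "move_head (length (tape w)) Rgt i = Suc i" using on_tape_nth[OF assms(1)] by (auto simp: min_def)
  have "step w (q, i, out) (q', Suc i, out @ [b])"
    using on_tape_nth[OF assms(1)] assms(2-5) mh unfolding step_def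
    by (simp only: split) (rule exI[of _ a], rule exI[of _ b], rule exI[of _ Rgt], simp)
  then show ?thesis using assms(4) unfolding runs_def step_nq_def by auto
qed

lemma runs_Stay:
  assumes "on_tape w i [a]" "has_tuple w (q, a, q', b, Stay)" "snd q" "q' \<noteq> q1" "b \<noteq> Blank"
  shows "runs w q i [] q' out (out @ [b])"
proof -
  have "step w (q, i, out) (q', i, out @ [b])"
    using on_tape_nth[OF assms(1)] assms(2-5) unfolding step_def
    by (simp only: split) (rule exI[of _ a], rule exI[of _ b], rule exI[of _ Stay], simp)
  then show ?thesis using assms(4) unfolding runs_def step_nq_def by auto
qed

lemma runs_scan:
  assumes "on_tape w i u" "\<forall>a\<in>set u. has_tuple w (q, a, q, a, Rgt)" "snd q" "q \<noteq> q1" "Blank \<notin> set u"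
  shows "runs w q i u q out (out @ u)"
  using assms
proof (induction u arbitrary: i out)
  case Nil then show ?case by (simp add: runs_def)
next
  case (Cons a u)
  have 1: "runs w q i [a] q out (out @ [a])"
    by (rule runs_Rgt) (use Cons.prems in \<open>auto simp: on_tape_Cons[of w i a u]\<close>)
  have 2: "runs w q (i + length [a]) u q (out @ [a]) ((out @ [a]) @ u)"
    by (rule Cons.IH) (use Cons.prems in \<open>auto simp: on_tape_Cons[of w i a u]\<close>)
  show ?case using runs_append[OF 1 2] by simp
qed

lemma enc_gen_tuple: "enc_tuple (gen_tuple n) = [SR, EndN, Z, ST] @ replicate n One1 @ [EndN, Z, MvN]"
  by (simp add: gen_tuple_def q1_def)
lemma enc_pad_tuple: "enc_tuple (pad_tuple n) = [SR, EndN, One1, ST] @ replicate n One1 @ [EndN, Z, MvN]"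
  by (simp add: pad_tuple_def q1_def)
lemma enc_end_tuple: "enc_tuple end_tuple = [SR, EndN, EndN, SR, EndN, Z, MvN]"
  by (simp add: end_tuple_def q1_def)
lemma enc_reg_tuple: "enc_tuple (reg_tuple t s j) = [ST] @ replicate (Suc j + t) One1 @ [EndN, Z, ST] @ replicate (s j) One1 @ [EndN, Z, MvN]"
  by (simp add: reg_tuple_def)
lemma enc_start_tuple: "enc_tuple (start_tuple p) = [ST, EndN, Z, SR] @ replicate (Suc (to_nat (LI p))) One1 @ [EndN, Z, MvN]"
  by (simp add: start_tuple_def q0_def cstate_def)

lemma replicate_shift: "replicate n x @ x # r = x # replicate n x @ r"
  by (metis append_Cons append_assoc replicate_app_Cons_same)

locale simulator =
  fixes prog :: "instr list" and K :: nat
begin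

definition next_pc :: "nat \<Rightarrow> bool \<Rightarrow> nat" where
  "next_pc pc z = (case prog ! pc of Inc r \<Rightarrow> Suc pc | Dec r j \<Rightarrow> if z then j else Suc pc)"

definition start_len :: "nat \<Rightarrow> nat" where "start_len pc = length (enc_tuple (start_tuple pc))"

definition start_rewrite :: "nat \<Rightarrow> bool \<Rightarrow> sym list" where
  "start_rewrite pc z = replicate (start_len pc) One1 @ [EndN, Z, MvN] @ enc_tuple (start_tuple (next_pc pc z))"

definition ctrl_trans :: "ctrl \<Rightarrow> sym \<Rightarrow> (state \<times> sym \<times> move) option" where
 "ctrl_trans l a = (if a = Blank then None else case l of
   LI pc \<Rightarrow> if pc < length prog \<and> a = LEnd then Some (cstate (F1 pc), SR, Rgt) else None
 | F1 pc \<Rightarrow> if pc < length prog \<and> a = SR then Some (cstate (F2 pc), EndN, Rgt) else None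
 | F2 pc \<Rightarrow> if pc < length prog \<and> a = EndN then Some (cstate (F3 pc), Z, Rgt) else None
 | F3 pc \<Rightarrow> if pc < length prog \<and> a = Z then Some (cstate (F4 pc), ST, Rgt) else None
 | F4 pc \<Rightarrow> if pc < length prog \<and> a = ST then Some (cstate (F5 pc), One1, Rgt) else None
 | F5 pc \<Rightarrow> if pc < length prog \<and> a = One1 then Some (cstate (F5 pc), One1, Rgt)
      else if pc < length prog \<and> a = EndN then Some (cstate (F6 pc), EndN, Rgt) else None
 | F6 pc \<Rightarrow> if pc < length prog \<and> a = Z then Some (cstate (F7 pc), Z, Rgt) else None
 | F7 pc \<Rightarrow> if pc < length prog \<and> a = MvN then Some (cstate (RA pc 0 False), MvN, Rgt) else None
 | RA pc j z \<Rightarrow> if pc < length prog \<and> j < K \<and> a = ST then Some (cstate (RK pc j z), ST, Rgt)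
      else if pc < length prog \<and> j = K \<and> a = SR then Some (cstate (H1 pc z), SR, Rgt) else None
 | RK pc j z \<Rightarrow> if pc < length prog \<and> j < K \<and> a = One1 then
        (if j = areg (prog ! pc) then
           (if isDec (prog ! pc) then Some (cstate (D1 pc), One1, Rgt) else Some (cstate (IK pc), One1, Stay))
         else Some (cstate (RC pc j z), One1, Stay))
      else None
 | RC pc j z \<Rightarrow> if pc < length prog \<and> j < K \<and> a \<in> {One1, EndN, Z, ST} then Some (cstate (RC pc j z), a, Rgt)
      else if pc < length prog \<and> j < K \<and> a = MvN then Some (cstate (RA pc (Suc j) z), MvN, Rgt) else None
 | IK pc \<Rightarrow> if pc < length prog \<and> a = One1 then Some (cstate (IK pc), One1, Rgt)
      else if pc < length prog \<and> a = EndN then Some (cstate (IE pc), EndN, Rgt) else None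
 | IE pc \<Rightarrow> if pc < length prog \<and> a = Z then Some (cstate (IZ pc), Z, Rgt) else None
 | IZ pc \<Rightarrow> if pc < length prog \<and> a = ST then Some (cstate (IV pc), ST, Rgt) else None
 | IV pc \<Rightarrow> if pc < length prog \<and> a \<in> {One1, EndN} then Some (cstate (RC pc (areg (prog ! pc)) False), One1, Stay) else None
 | D1 pc \<Rightarrow> if pc < length prog \<and> a = One1 then Some (cstate (D1 pc), One1, Rgt)
      else if pc < length prog \<and> a = EndN then Some (cstate (D2 pc), One1, Rgt) else None
 | D2 pc \<Rightarrow> if pc < length prog \<and> a = Z then Some (cstate (D3 pc), EndN, Rgt) else None
 | D3 pc \<Rightarrow> if pc < length prog \<and> a = ST then Some (cstate (D4 pc), Z, Rgt) else None
 | D4 pc \<Rightarrow> if pc < length prog \<and> a = One1 then Some (cstate (RC pc (areg (prog ! pc)) False), ST, Rgt)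
      else if pc < length prog \<and> a = EndN then Some (cstate (RC pc (areg (prog ! pc)) True), ST, Stay) else None
 | H1 pc z \<Rightarrow> if pc < length prog \<and> a = EndN then Some (cstate (H2 pc z), EndN, Rgt) else None
 | H2 pc z \<Rightarrow> if pc < length prog \<and> a = One1 then Some (cstate (H3 pc z), One1, Rgt) else None
 | H3 pc z \<Rightarrow> if pc < length prog \<and> a = ST then Some (cstate (H4 pc z), ST, Rgt) else None
 | H4 pc z \<Rightarrow> if pc < length prog \<and> a = One1 then Some (cstate (H4 pc z), One1, Rgt)
      else if pc < length prog \<and> a = EndN then Some (cstate (LG pc z 1), start_rewrite pc z ! 0, Rgt) else None
 | LG pc z i \<Rightarrow> if pc < length prog \<and> 0 < i \<and> i < length (start_rewrite pc z) then
        Some (if Suc i < length (start_rewrite pc z) then cstate (LG pc z (Suc i)) else cstate C0, start_rewrite pc z ! i,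
              if i < 3 + start_len pc then Rgt else Stay) else None
 | C0 \<Rightarrow> if a = SR then Some (cstate C1f, SR, Rgt) else None
 | C1f \<Rightarrow> if a = One1 then Some (cstate C1, One1, Rgt) else if a = EndN then Some (cstate E2, EndN, Rgt) else None
 | C1 \<Rightarrow> if a = One1 then Some (cstate C1, One1, Rgt) else if a = EndN then Some (cstate C2, EndN, Rgt) else None
 | C2 \<Rightarrow> Some (cstate C3, a, Rgt)
 | C3 \<Rightarrow> Some (cstate C4, a, Rgt)
 | C4 \<Rightarrow> if a = One1 then Some (cstate C4, One1, Rgt) else if a = EndN then Some (cstate C5, EndN, Rgt) else None
 | C5 \<Rightarrow> Some (cstate C6, a, Rgt)
 | C6 \<Rightarrow> Some (cstate C0, a, Rgt)
 | E2 \<Rightarrow> if a = EndN then Some (cstate E3, EndN, Rgt) else None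
 | E3 \<Rightarrow> if a = SR then Some (cstate E4, SR, Rgt) else None
 | E4 \<Rightarrow> if a = EndN then Some (cstate E5, EndN, Rgt) else None
 | E5 \<Rightarrow> if a = Z then Some (cstate E6, Z, Rgt) else None
 | E6 \<Rightarrow> if a = MvN then Some (q1, MvN, Stay) else None)"

definition ctrls :: "ctrl list" where
  "ctrls = concat (map (\<lambda>pc. [LI pc, F1 pc, F2 pc, F3 pc, F4 pc, F5 pc, F6 pc, F7 pc, IK pc, IE pc, IZ pc, IV pc,
        D1 pc, D2 pc, D3 pc, D4 pc]
      @ concat (map (\<lambda>j. concat (map (\<lambda>z. [RA pc j z, RK pc j z, RC pc j z]) [False, True])) [0..<Suc K])
      @ concat (map (\<lambda>z. [H1 pc z, H2 pc z, H3 pc z, H4 pc z] @ map (LG pc z) [0..<length (start_rewrite pc z)]) [False, True]))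
      [0..<length prog]) @ [C0, C1f, C1, C2, C3, C4, C5, C6, E2, E3, E4, E5, E6]"

definition ctrl_tuples :: "tuple list" where
  "ctrl_tuples = concat (map (\<lambda>l. concat (map (\<lambda>a. case ctrl_trans l a of None \<Rightarrow> [] | Some (q', b, d) \<Rightarrow> [(cstate l, a, q', b, d)]) read_syms)) ctrls)"

definition sim_tuples :: "nat \<times> nat \<times> nat \<Rightarrow> nat \<Rightarrow> regs \<Rightarrow> tuple list" where
  "sim_tuples g pc s = (case g of (tj, t, u) \<Rightarrow> [gen_tuple tj] @ map (reg_tuple t s) [0..<K] @ [pad_tuple u] @ [start_tuple pc] @ ctrl_tuples @ [end_tuple])"

definition sim_code :: "nat \<times> nat \<times> nat \<Rightarrow> nat \<Rightarrow> regs \<Rightarrow> sym list" where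
  "sim_code g pc s = concat (map enc_tuple (sim_tuples g pc s))"

lemma ctrl_tuples_mem: "t \<in> set ctrl_tuples \<Longrightarrow> \<exists>l a q' b d. t = (cstate l, a, q', b, d) \<and> ctrl_trans l a = Some (q', b, d)"
  unfolding ctrl_tuples_def by (auto split: option.splits)

lemma ctrl_tuples_memI:
  assumes "l \<in> set ctrls" "ctrl_trans l a = Some (q', b, d)"
  shows "(cstate l, a, q', b, d) \<in> set ctrl_tuples"
proof -
  let ?F = "\<lambda>l a. case ctrl_trans l a of None \<Rightarrow> [] | Some (q', b, d) \<Rightarrow> [(cstate l, a, q', b, d)]"
  have nb: "a \<noteq> Blank" using assms(2) by (auto simp: ctrl_trans_def)
  have "(cstate l, a, q', b, d) \<in> set (?F l a)" using assms(2) by simp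
  then have "(cstate l, a, q', b, d) \<in> set (concat (map (?F l) read_syms))"
    using nb by (auto intro: UN_I[of a])
  then show ?thesis unfolding ctrl_tuples_def using assms(1) by (auto intro: UN_I)
qed

lemma functional_sim_tuples: "functional_tuples (sim_tuples g pc s)"
  unfolding functional_tuples_def
proof (intro ballI impI)
  obtain tj t u where g: "g = (tj, t, u)" by (cases g) auto
  fix t1 t2 assume t1: "t1 \<in> set (sim_tuples g pc s)" and t2: "t2 \<in> set (sim_tuples g pc s)"
    and eq: "fst t1 = fst t2 \<and> fst (snd t1) = fst (snd t2)"
  let ?O = "set ([gen_tuple tj] @ map (reg_tuple t s) [0..<K] @ [pad_tuple u] @ [start_tuple pc] @ [end_tuple])"
  show "t1 = t2"
  proof (cases "t1 \<in> set ctrl_tuples")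
    case True
    then obtain l a q' b d where 1: "t1 = (cstate l, a, q', b, d)" "ctrl_trans l a = Some (q', b, d)" using ctrl_tuples_mem by blast
    have "t2 \<in> set ctrl_tuples" using t2 eq 1
      by (auto simp: sim_tuples_def g reg_tuple_def start_tuple_def gen_tuple_def pad_tuple_def end_tuple_def cstate_def q0_def q1_def)
    then obtain l' a' q'' b' d' where 2: "t2 = (cstate l', a', q'', b', d')" "ctrl_trans l' a' = Some (q'', b', d')" using ctrl_tuples_mem by blast
    from 1 2 eq show ?thesis by auto
  next
    case False
    then have o1: "t1 \<in> ?O" using t1 by (auto simp: sim_tuples_def g)
    then have "fst t1 \<notin> fst ` set ctrl_tuples"
      by (auto simp: reg_tuple_def start_tuple_def gen_tuple_def pad_tuple_def end_tuple_def q0_def q1_def cstate_def dest!: ctrl_tuples_mem)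
    then have "t2 \<notin> set ctrl_tuples" using eq by force
    then have "t2 \<in> ?O" using t2 by (auto simp: sim_tuples_def g)
    then show ?thesis using o1 eq by (auto simp: reg_tuple_def start_tuple_def gen_tuple_def pad_tuple_def end_tuple_def q0_def q1_def)
  qed
qed

lemma proper_sim_code: "proper_code (sim_code g pc s)"
  unfolding proper_code_def sim_code_def using functional_sim_tuples by blast

lemma has_tuple_sim_code: "has_tuple (sim_code g pc s) t \<longleftrightarrow> t \<in> set (sim_tuples g pc s)"
proof
  assume "has_tuple (sim_code g pc s) t"
  then obtain ts where "sim_code g pc s = concat (map enc_tuple ts)" "t \<in> set ts" by (auto simp: has_tuple_def)
  moreover then have "ts = sim_tuples g pc s" using concat_enc_tuple_inj unfolding sim_code_def by metis
  ultimately show "t \<in> set (sim_tuples g pc s)" by simp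
qed (auto simp: has_tuple_def sim_code_def)

lemma has_tuple_ctrl: "l \<in> set ctrls \<Longrightarrow> ctrl_trans l a = Some (q', b, d) \<Longrightarrow> has_tuple (sim_code g pc s) (cstate l, a, q', b, d)"
  using ctrl_tuples_memI by (cases g) (auto simp: has_tuple_sim_code sim_tuples_def)

lemma has_tuple_cstate_ctrl: "has_tuple (sim_code g pc s) (cstate l, a, q', b, d) \<Longrightarrow> ctrl_trans l a = Some (q', b, d)"
  by (cases g) (auto simp: has_tuple_sim_code sim_tuples_def reg_tuple_def start_tuple_def gen_tuple_def pad_tuple_def end_tuple_def q0_def q1_def cstate_def dest!: ctrl_tuples_mem)

lemma ctrls_mem[simp]:
  "pc < length prog \<Longrightarrow> LI pc \<in> set ctrls"
  "pc < length prog \<Longrightarrow> F1 pc \<in> set ctrls" "pc < length prog \<Longrightarrow> F2 pc \<in> set ctrls"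
  "pc < length prog \<Longrightarrow> F3 pc \<in> set ctrls" "pc < length prog \<Longrightarrow> F4 pc \<in> set ctrls"
  "pc < length prog \<Longrightarrow> F5 pc \<in> set ctrls" "pc < length prog \<Longrightarrow> F6 pc \<in> set ctrls"
  "pc < length prog \<Longrightarrow> F7 pc \<in> set ctrls"
  "pc < length prog \<Longrightarrow> IK pc \<in> set ctrls" "pc < length prog \<Longrightarrow> IE pc \<in> set ctrls"
  "pc < length prog \<Longrightarrow> IZ pc \<in> set ctrls" "pc < length prog \<Longrightarrow> IV pc \<in> set ctrls"
  "pc < length prog \<Longrightarrow> D1 pc \<in> set ctrls" "pc < length prog \<Longrightarrow> D2 pc \<in> set ctrls"
  "pc < length prog \<Longrightarrow> D3 pc \<in> set ctrls" "pc < length prog \<Longrightarrow> D4 pc \<in> set ctrls"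
  "pc < length prog \<Longrightarrow> j \<le> K \<Longrightarrow> RA pc j z \<in> set ctrls"
  "pc < length prog \<Longrightarrow> j \<le> K \<Longrightarrow> RK pc j z \<in> set ctrls"
  "pc < length prog \<Longrightarrow> j \<le> K \<Longrightarrow> RC pc j z \<in> set ctrls"
  "pc < length prog \<Longrightarrow> H1 pc z \<in> set ctrls" "pc < length prog \<Longrightarrow> H2 pc z \<in> set ctrls"
  "pc < length prog \<Longrightarrow> H3 pc z \<in> set ctrls" "pc < length prog \<Longrightarrow> H4 pc z \<in> set ctrls"
  "pc < length prog \<Longrightarrow> i < length (start_rewrite pc z) \<Longrightarrow> LG pc z i \<in> set ctrls"
  "C0 \<in> set ctrls" "C1f \<in> set ctrls" "C1 \<in> set ctrls" "C2 \<in> set ctrls" "C3 \<in> set ctrls"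
  "C4 \<in> set ctrls" "C5 \<in> set ctrls" "C6 \<in> set ctrls" "E2 \<in> set ctrls" "E3 \<in> set ctrls"
  "E4 \<in> set ctrls" "E5 \<in> set ctrls" "E6 \<in> set ctrls"
  unfolding ctrls_def by (cases z; force)+


lemma start_rewrite_not_Blank: "Blank \<notin> set (start_rewrite pc z)"
  by (simp add: start_rewrite_def enc_start_tuple)

lemma start_rewrite_length: "3 + start_len pc < length (start_rewrite pc z)"
  by (simp add: start_rewrite_def enc_start_tuple)

lemma start_rewrite_nth_not_Blank: "i < length (start_rewrite pc z) \<Longrightarrow> start_rewrite pc z ! i \<noteq> Blank"
  using start_rewrite_not_Blank nth_mem by metis

lemma start_rewrite_nth0: "start_rewrite pc z ! 0 \<noteq> Blank"
  using start_rewrite_nth_not_Blank[of 0 pc z] start_rewrite_length[of pc z] by fastforce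

lemma ctrl_trans_not_Blank: "ctrl_trans l a = Some (q', b, d) \<Longrightarrow> b \<noteq> Blank"
  unfolding ctrl_trans_def using start_rewrite_nth0 start_rewrite_nth_not_Blank by (auto split: ctrl.splits if_splits)

lemma runs_ctrl_Rgt:
  assumes "on_tape (sim_code g pc s) i [a]" "l \<in> set ctrls" "ctrl_trans l a = Some (q', b, Rgt)" "q' \<noteq> q1"
  shows "runs (sim_code g pc s) (cstate l) i [a] q' out (out @ [b])"
  by (rule runs_Rgt[OF assms(1) has_tuple_ctrl[OF assms(2,3)]]) (use assms ctrl_trans_not_Blank[OF assms(3)] in auto)

lemma runs_ctrl_Stay:
  assumes "on_tape (sim_code g pc s) i [a]" "l \<in> set ctrls" "ctrl_trans l a = Some (q', b, Stay)" "q' \<noteq> q1"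
  shows "runs (sim_code g pc s) (cstate l) i [] q' out (out @ [b])"
  by (rule runs_Stay[OF assms(1) has_tuple_ctrl[OF assms(2,3)]]) (use assms ctrl_trans_not_Blank[OF assms(3)] in auto)

lemma runs_ctrl_scan:
  assumes "on_tape (sim_code g pc s) i u" "l \<in> set ctrls" "\<forall>a\<in>set u. ctrl_trans l a = Some (cstate l, a, Rgt)"
  shows "runs (sim_code g pc s) (cstate l) i u (cstate l) out (out @ u)"
proof (rule runs_scan)
  show "Blank \<notin> set u" using assms(3) by (auto simp: ctrl_trans_def)
  show "\<forall>a\<in>set u. has_tuple (sim_code g pc s) (cstate l, a, cstate l, a, Rgt)"
    using assms(3) has_tuple_ctrl[OF assms(2)] by blast
qed (use assms in auto)

lemma sim_code_split: "sim_code (tj, t, u) pc s = enc_tuple (gen_tuple tj) @ concat (map enc_tuple (map (reg_tuple t s) [0..<K])) @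
   enc_tuple (pad_tuple u) @ enc_tuple (start_tuple pc) @ concat (map enc_tuple ctrl_tuples) @ enc_tuple end_tuple"
  by (simp add: sim_code_def sim_tuples_def)


lemma runs_append': "runs w q i u q' o1 o2 \<Longrightarrow> j = i + length u \<Longrightarrow> runs w q' j v q'' o2 o3 \<Longrightarrow> runs w q i (u @ v) q'' o1 o3"
  using runs_append by blast

lemma runs_walk:
  assumes "on_tape (sim_code g pc s) i u" "length v = length u"
    "\<forall>k<length u. L k \<in> set ctrls \<and> ctrl_trans (L k) (u!k) = Some (cstate (L (Suc k)), v!k, Rgt)"
  shows "runs (sim_code g pc s) (cstate (L 0)) i u (cstate (L (length u))) out (out @ v)"
  using assms
proof (induction u arbitrary: i v L out)
  case Nil then show ?case by (simp add: runs_def)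
next
  case (Cons a u)
  obtain b v' where v: "v = b # v'" using Cons.prems(2) by (cases v) auto
  have 1: "runs (sim_code g pc s) (cstate (L 0)) i [a] (cstate (L (Suc 0))) out (out @ [b])"
    by (rule runs_ctrl_Rgt) (use Cons.prems v in \<open>auto simp: on_tape_Cons[of _ i a u]\<close>)
  have P3: "\<forall>k<length u. L (Suc k) \<in> set ctrls \<and> ctrl_trans (L (Suc k)) (u!k) = Some (cstate (L (Suc (Suc k))), v'!k, Rgt)"
  proof (intro allI impI)
    fix k assume "k < length u"
    then show "L (Suc k) \<in> set ctrls \<and> ctrl_trans (L (Suc k)) (u!k) = Some (cstate (L (Suc (Suc k))), v'!k, Rgt)"
      using Cons.prems(3)[rule_format, of "Suc k"] v by simp
  qed
  have 2: "runs (sim_code g pc s) (cstate (L (Suc 0))) (Suc i) u (cstate (L (Suc (length u)))) (out @ [b]) ((out @ [b]) @ v')"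
    using Cons.IH[of "Suc i" v' "\<lambda>k. L (Suc k)" "out @ [b]", OF _ _ P3] Cons.prems v
    by (auto simp: on_tape_Cons[of _ i a u])
  show ?case using runs_append'[OF 1 _ 2] v by simp
qed

lemma runs_walk':
  assumes "on_tape (sim_code g pc s) i u" "length v = length u"
    "\<forall>k<length u. L k \<in> set ctrls \<and> ctrl_trans (L k) (u!k) = Some (cstate (L (Suc k)), v!k, Rgt)"
    "q = cstate (L 0)" "q' = cstate (L (length u))" "out' = out @ v"
  shows "runs (sim_code g pc s) q i u q' out out'"
  using runs_walk[OF assms(1-3)] assms(4-6) by simp

lemma runs_gen_tuple:
  assumes pc: "pc < length prog"
  shows "runs (sim_code (tj, t, u) pc s) (cstate (LI pc)) 0 ([LEnd] @ enc_tuple (gen_tuple tj)) (cstate (RA pc 0 False)) [] (enc_tuple (gen_tuple (Suc tj)))"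
proof -
  let ?w = "sim_code (tj, t, u) pc s"
  have A0: "on_tape ?w (Suc 0) ?w" by (rule on_tape_code)
  have A: "on_tape ?w (Suc 0) (enc_tuple (gen_tuple tj))" using A0 unfolding sim_code_split[of tj t u pc s] on_tape_append by blast
  have A1: "on_tape ?w 0 ([LEnd] @ enc_tuple (gen_tuple tj))" unfolding on_tape_append[of _ 0 "[LEnd]"] using on_tape_LEnd A by simp
  have A': "on_tape ?w 0 ([LEnd, SR, EndN, Z, ST] @ replicate tj One1 @ [EndN, Z, MvN])"
    using A1 by (simp add: enc_gen_tuple)
  have a1: "on_tape ?w 0 [LEnd, SR, EndN, Z, ST]" "on_tape ?w 5 (replicate tj One1)" "on_tape ?w (5 + tj) [EndN, Z, MvN]"
    using A' on_tape_append[of ?w 0 "[LEnd, SR, EndN, Z, ST]" "replicate tj One1 @ [EndN, Z, MvN]"]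
      on_tape_append[of ?w 5 "replicate tj One1" "[EndN, Z, MvN]"] by (simp_all add: eval_nat_numeral)
  have 1: "runs ?w (cstate (LI pc)) 0 [LEnd, SR, EndN, Z, ST] (cstate (F5 pc)) [] [SR, EndN, Z, ST, One1]"
    by (rule runs_walk'[OF a1(1), where L="\<lambda>k. [LI pc, F1 pc, F2 pc, F3 pc, F4 pc, F5 pc] ! k"])
      (use pc in \<open>auto simp: less_Suc_eq ctrl_trans_def\<close>)
  have 2: "runs ?w (cstate (F5 pc)) 5 (replicate tj One1) (cstate (F5 pc)) [SR, EndN, Z, ST, One1] ([SR, EndN, Z, ST, One1] @ replicate tj One1)"
    by (rule runs_ctrl_scan[OF a1(2)]) (use pc in \<open>auto simp: ctrl_trans_def\<close>)
  have 3: "runs ?w (cstate (F5 pc)) (5 + tj) [EndN, Z, MvN]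
     (cstate (RA pc 0 False)) ([SR, EndN, Z, ST, One1] @ replicate tj One1)
     (([SR, EndN, Z, ST, One1] @ replicate tj One1) @ [EndN, Z, MvN])"
    by (rule runs_walk'[OF a1(3), where L="\<lambda>k. [F5 pc, F6 pc, F7 pc, RA pc 0 False] ! k"])
      (use pc in \<open>auto simp: less_Suc_eq ctrl_trans_def\<close>)
  have "runs ?w (cstate (LI pc)) 0 ([LEnd, SR, EndN, Z, ST] @ replicate tj One1 @ [EndN, Z, MvN]) (cstate (RA pc 0 False)) []
     (([SR, EndN, Z, ST, One1] @ replicate tj One1) @ [EndN, Z, MvN])"
    using runs_append'[OF 1 _ runs_append'[OF 2 _ 3]] by simp
  then show ?thesis by (simp add: enc_gen_tuple)
qed

lemma on_tape_sub: "on_tape w i x \<Longrightarrow> x = u @ v @ r \<Longrightarrow> j = i + length u \<Longrightarrow> on_tape w j v"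
  using on_tape_append[of w i u "v @ r"] on_tape_append[of w "i + length u" v r] by auto

lemma runs_ctrl_Stay':
  assumes "on_tape (sim_code g pc s) i [a]" "l \<in> set ctrls" "ctrl_trans l a = Some (cstate l', b, Stay)" "out' = out @ [b]"
  shows "runs (sim_code g pc s) (cstate l) i [] (cstate l') out out'"
  using runs_ctrl_Stay[OF assms(1-3)] assms(4) by simp

lemma runs_ctrl_scan':
  assumes "on_tape (sim_code g pc s) i u" "l \<in> set ctrls" "\<forall>a\<in>set u. ctrl_trans l a = Some (cstate l, a, Rgt)" "out' = out @ u"
  shows "runs (sim_code g pc s) (cstate l) i u (cstate l) out out'"
  using runs_ctrl_scan[OF assms(1-3)] assms(4) by simp

definition next_regs :: "nat \<Rightarrow> regs \<Rightarrow> regs" where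
  "next_regs pc s = (case prog ! pc of Inc r \<Rightarrow> s(r := Suc (s r)) | Dec r j \<Rightarrow> if s r = 0 then s else s(r := s r - 1))"

definition zero_seen :: "nat \<Rightarrow> regs \<Rightarrow> nat \<Rightarrow> bool" where
  "zero_seen pc s j = (isDec (prog ! pc) \<and> areg (prog ! pc) < j \<and> s (areg (prog ! pc)) = 0)"

lemma runs_reg_tuple_other:
  assumes pc: "pc < length prog" and j: "j < K" "j \<noteq> areg (prog ! pc)"
    and A: "on_tape (sim_code g pc s0) i (enc_tuple (reg_tuple t s j))"
  shows "runs (sim_code g pc s0) (cstate (RA pc j z)) i (enc_tuple (reg_tuple t s j)) (cstate (RA pc (Suc j) z)) out
           (out @ enc_tuple (reg_tuple (Suc t) s j))"
proof -
  let ?w = "sim_code g pc s0"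
  let ?X = "replicate (Suc j + t) One1 @ [EndN, Z, ST] @ replicate (s j) One1 @ [EndN, Z]"
  have A': "on_tape ?w i ([ST] @ ?X @ [MvN])" using A by (simp add: enc_reg_tuple)
  have 1: "runs ?w (cstate (RA pc j z)) i [ST] (cstate (RK pc j z)) out (out @ [ST])"
    by (rule runs_walk'[where L="\<lambda>k. [RA pc j z, RK pc j z] ! k"]) (use A' pc j in \<open>auto intro: on_tape_sub[OF A', of "[]" _ "?X @ [MvN]"] simp: ctrl_trans_def\<close>)
  have 2: "runs ?w (cstate (RK pc j z)) (Suc i) [] (cstate (RC pc j z)) (out @ [ST]) (out @ [ST, One1])"
    by (rule runs_ctrl_Stay'[where a = One1]) (use A' pc j in \<open>auto intro: on_tape_sub[OF A', of "[ST]" _ "replicate (j + t) One1 @ [EndN, Z, ST] @ replicate (s j) One1 @ [EndN, Z, MvN]"] simp: ctrl_trans_def\<close>)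
  have 3: "runs ?w (cstate (RC pc j z)) (Suc i) ?X (cstate (RC pc j z)) (out @ [ST, One1]) (out @ [ST, One1] @ ?X)"
    by (rule runs_ctrl_scan') (use A' pc j in \<open>auto intro: on_tape_sub[OF A', of "[ST]" _ "[MvN]"] simp: ctrl_trans_def\<close>)
  have 4: "runs ?w (cstate (RC pc j z)) (Suc i + length ?X) [MvN] (cstate (RA pc (Suc j) z)) (out @ [ST, One1] @ ?X) (out @ [ST, One1] @ ?X @ [MvN])"
    by (rule runs_walk'[where L="\<lambda>k. [RC pc j z, RA pc (Suc j) z] ! k"]) (use A' pc j in \<open>auto intro: on_tape_sub[OF A', of "[ST] @ ?X" _ "[]"] simp: ctrl_trans_def\<close>)
  have "runs ?w (cstate (RA pc j z)) i ([ST] @ [] @ ?X @ [MvN]) (cstate (RA pc (Suc j) z)) out (out @ [ST, One1] @ ?X @ [MvN])"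
    by (rule runs_append'[OF 1 _ runs_append'[OF 2 _ runs_append'[OF 3 _ 4]]]) simp_all
  then show ?thesis by (simp add: enc_reg_tuple)
qed


lemma runs_reg_tuple_Inc:
  assumes pc: "pc < length prog" and j: "j < K" and ins: "prog ! pc = Inc j"
    and A: "on_tape (sim_code g pc s0) i (enc_tuple (reg_tuple t s j))"
  shows "runs (sim_code g pc s0) (cstate (RA pc j False)) i (enc_tuple (reg_tuple t s j)) (cstate (RA pc (Suc j) False)) out
           (out @ enc_tuple (reg_tuple (Suc t) (s(j := Suc (s j))) j))"
proof -
  let ?w = "sim_code g pc s0"
  let ?K = "replicate (Suc j + t) One1"
  let ?V = "replicate (s j) One1 @ [EndN, Z]"
  have A': "on_tape ?w i ([ST] @ ?K @ [EndN, Z, ST] @ ?V @ [MvN])" using A by (simp add: enc_reg_tuple)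
  have 1: "runs ?w (cstate (RA pc j False)) i [ST] (cstate (RK pc j False)) out (out @ [ST])"
    by (rule runs_walk'[where L="\<lambda>k. [RA pc j False, RK pc j False] ! k"]) (use A' pc j ins in \<open>auto intro: on_tape_sub[OF A', of "[]" _ "?K @ [EndN, Z, ST] @ ?V @ [MvN]"] simp: ctrl_trans_def\<close>)
  have 2: "runs ?w (cstate (RK pc j False)) (Suc i) [] (cstate (IK pc)) (out @ [ST]) (out @ [ST, One1])"
    by (rule runs_ctrl_Stay'[where a = One1]) (use A' pc j ins in \<open>auto intro: on_tape_sub[OF A', of "[ST]" _ "replicate (j + t) One1 @ [EndN, Z, ST] @ ?V @ [MvN]"] simp: ctrl_trans_def\<close>)
  have 3: "runs ?w (cstate (IK pc)) (Suc i) ?K (cstate (IK pc)) (out @ [ST, One1]) (out @ [ST, One1] @ ?K)"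
    by (rule runs_ctrl_scan') (use A' pc j in \<open>auto intro: on_tape_sub[OF A', of "[ST]" _ "[EndN, Z, ST] @ ?V @ [MvN]"] simp: ctrl_trans_def\<close>)
  have 4: "runs ?w (cstate (IK pc)) (Suc i + length ?K) [EndN, Z, ST] (cstate (IV pc)) (out @ [ST, One1] @ ?K) (out @ [ST, One1] @ ?K @ [EndN, Z, ST])"
    by (rule runs_walk'[where L="\<lambda>k. [IK pc, IE pc, IZ pc, IV pc] ! k"]) (use A' pc j in \<open>auto intro: on_tape_sub[OF A', of "[ST] @ ?K" _ "?V @ [MvN]"] simp: ctrl_trans_def less_Suc_eq\<close>)
  have 5: "runs ?w (cstate (IV pc)) (Suc i + length ?K + 3) [] (cstate (RC pc j False)) (out @ [ST, One1] @ ?K @ [EndN, Z, ST])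
     (out @ [ST, One1] @ ?K @ [EndN, Z, ST, One1])"
  proof (cases "s j")
    case 0
    show ?thesis
      by (rule runs_ctrl_Stay'[where a = EndN]) (use A' pc j ins 0 in \<open>auto intro: on_tape_sub[OF A', of "[ST] @ ?K @ [EndN, Z, ST]" _ "[Z, MvN]"] simp: ctrl_trans_def\<close>)
  next
    case (Suc m)
    show ?thesis
      by (rule runs_ctrl_Stay'[where a = One1]) (use A' pc j ins Suc in \<open>auto intro: on_tape_sub[OF A', of "[ST] @ ?K @ [EndN, Z, ST]" _ "replicate m One1 @ [EndN, Z, MvN]"] simp: ctrl_trans_def\<close>)
  qed
  have 6: "runs ?w (cstate (RC pc j False)) (Suc i + length ?K + 3) ?V (cstate (RC pc j False)) (out @ [ST, One1] @ ?K @ [EndN, Z, ST, One1])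
     (out @ [ST, One1] @ ?K @ [EndN, Z, ST, One1] @ ?V)"
    by (rule runs_ctrl_scan') (use A' pc j in \<open>auto intro: on_tape_sub[OF A', of "[ST] @ ?K @ [EndN, Z, ST]" _ "[MvN]"] simp: ctrl_trans_def\<close>)
  have 7: "runs ?w (cstate (RC pc j False)) (Suc i + length ?K + 3 + length ?V) [MvN] (cstate (RA pc (Suc j) False))
     (out @ [ST, One1] @ ?K @ [EndN, Z, ST, One1] @ ?V) (out @ [ST, One1] @ ?K @ [EndN, Z, ST, One1] @ ?V @ [MvN])"
    by (rule runs_walk'[where L="\<lambda>k. [RC pc j False, RA pc (Suc j) False] ! k"]) (use A' pc j in \<open>auto intro: on_tape_sub[OF A', of "[ST] @ ?K @ [EndN, Z, ST] @ ?V" _ "[]"] simp: ctrl_trans_def\<close>)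
  have "runs ?w (cstate (RA pc j False)) i ([ST] @ [] @ ?K @ [EndN, Z, ST] @ [] @ ?V @ [MvN]) (cstate (RA pc (Suc j) False)) out
     (out @ [ST, One1] @ ?K @ [EndN, Z, ST, One1] @ ?V @ [MvN])"
    by (rule runs_append'[OF 1 _ runs_append'[OF 2 _ runs_append'[OF 3 _ runs_append'[OF 4 _ runs_append'[OF 5 _ runs_append'[OF 6 _ 7]]]]]]) simp_all
  then show ?thesis by (simp add: enc_reg_tuple replicate_append_same)
qed


lemma runs_reg_tuple_Dec:
  assumes pc: "pc < length prog" and j: "j < K" and ins: "prog ! pc = Dec j jj"
    and A: "on_tape (sim_code g pc s0) i (enc_tuple (reg_tuple t s j))"
  shows "runs (sim_code g pc s0) (cstate (RA pc j False)) i (enc_tuple (reg_tuple t s j)) (cstate (RA pc (Suc j) (s j = 0))) out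
           (out @ enc_tuple (reg_tuple (Suc t) (if s j = 0 then s else s(j := s j - 1)) j))"
proof -
  let ?w = "sim_code g pc s0"
  let ?K = "replicate (j + t) One1"
  have A': "on_tape ?w i ([ST, One1] @ ?K @ [EndN, Z, ST] @ replicate (s j) One1 @ [EndN, Z, MvN])" using A by (simp add: enc_reg_tuple)
  have 1: "runs ?w (cstate (RA pc j False)) i [ST, One1] (cstate (D1 pc)) out (out @ [ST, One1])"
    by (rule runs_walk'[where L="\<lambda>k. [RA pc j False, RK pc j False, D1 pc] ! k"]) (use A' pc j ins in \<open>auto intro: on_tape_sub[OF A', of "[]" _ "?K @ [EndN, Z, ST] @ replicate (s j) One1 @ [EndN, Z, MvN]"] simp: ctrl_trans_def less_Suc_eq\<close>)
  have 3: "runs ?w (cstate (D1 pc)) (Suc (Suc i)) ?K (cstate (D1 pc)) (out @ [ST, One1]) (out @ [ST, One1] @ ?K)"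
    by (rule runs_ctrl_scan') (use A' pc j in \<open>auto intro: on_tape_sub[OF A', of "[ST, One1]" _ "[EndN, Z, ST] @ replicate (s j) One1 @ [EndN, Z, MvN]"] simp: ctrl_trans_def\<close>)
  show ?thesis
  proof (cases "s j")
    case 0
    have A0: "on_tape ?w i ([ST, One1] @ ?K @ [EndN, Z, ST] @ [EndN, Z, MvN])" using A' 0 by simp
    have 4: "runs ?w (cstate (D1 pc)) (Suc (Suc i) + length ?K) [EndN, Z, ST] (cstate (D4 pc)) (out @ [ST, One1] @ ?K) (out @ [ST, One1] @ ?K @ [One1, EndN, Z])"
      by (rule runs_walk'[where L="\<lambda>k. [D1 pc, D2 pc, D3 pc, D4 pc] ! k"]) (use A0 pc j in \<open>auto intro: on_tape_sub[OF A0, of "[ST, One1] @ ?K" _ "[EndN, Z, MvN]"] simp: ctrl_trans_def less_Suc_eq\<close>)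
    have 5: "runs ?w (cstate (D4 pc)) (Suc (Suc i) + length ?K + 3) [] (cstate (RC pc j True)) (out @ [ST, One1] @ ?K @ [One1, EndN, Z])
        (out @ [ST, One1] @ ?K @ [One1, EndN, Z, ST])"
      by (rule runs_ctrl_Stay'[where a = EndN]) (use A0 pc j ins in \<open>auto intro: on_tape_sub[OF A0, of "[ST, One1] @ ?K @ [EndN, Z, ST]" _ "[Z, MvN]"] simp: ctrl_trans_def\<close>)
    have 6: "runs ?w (cstate (RC pc j True)) (Suc (Suc i) + length ?K + 3) [EndN, Z, MvN] (cstate (RA pc (Suc j) True))
        (out @ [ST, One1] @ ?K @ [One1, EndN, Z, ST]) (out @ [ST, One1] @ ?K @ [One1, EndN, Z, ST] @ [EndN, Z, MvN])"
      by (rule runs_walk'[where L="\<lambda>k. [RC pc j True, RC pc j True, RC pc j True, RA pc (Suc j) True] ! k"]) (use A0 pc j in \<open>auto intro: on_tape_sub[OF A0, of "[ST, One1] @ ?K @ [EndN, Z, ST]" _ "[]"] simp: ctrl_trans_def less_Suc_eq\<close>)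
    have "runs ?w (cstate (RA pc j False)) i ([ST, One1] @ ?K @ [EndN, Z, ST] @ [] @ [EndN, Z, MvN]) (cstate (RA pc (Suc j) True)) out
        (out @ [ST, One1] @ ?K @ [One1, EndN, Z, ST] @ [EndN, Z, MvN])"
      by (rule runs_append'[OF 1 _ runs_append'[OF 3 _ runs_append'[OF 4 _ runs_append'[OF 5 _ 6]]]]) simp_all
    then show ?thesis using 0 by (simp add: enc_reg_tuple replicate_shift)
  next
    case (Suc m)
    have A0: "on_tape ?w i ([ST, One1] @ ?K @ [EndN, Z, ST, One1] @ replicate m One1 @ [EndN, Z] @ [MvN])" using A' Suc by simp
    have 4: "runs ?w (cstate (D1 pc)) (Suc (Suc i) + length ?K) [EndN, Z, ST, One1] (cstate (RC pc j False)) (out @ [ST, One1] @ ?K) (out @ [ST, One1] @ ?K @ [One1, EndN, Z, ST])"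
      by (rule runs_walk'[where L="\<lambda>k. [D1 pc, D2 pc, D3 pc, D4 pc, RC pc j False] ! k"]) (use A0 pc j ins in \<open>auto intro: on_tape_sub[OF A0, of "[ST, One1] @ ?K" _ "replicate m One1 @ [EndN, Z] @ [MvN]"] simp: ctrl_trans_def less_Suc_eq\<close>)
    have 5: "runs ?w (cstate (RC pc j False)) (Suc (Suc i) + length ?K + 4) (replicate m One1 @ [EndN, Z]) (cstate (RC pc j False))
        (out @ [ST, One1] @ ?K @ [One1, EndN, Z, ST]) (out @ [ST, One1] @ ?K @ [One1, EndN, Z, ST] @ replicate m One1 @ [EndN, Z])"
      by (rule runs_ctrl_scan') (use A0 pc j in \<open>auto intro: on_tape_sub[OF A0, of "[ST, One1] @ ?K @ [EndN, Z, ST, One1]" _ "[MvN]"] simp: ctrl_trans_def\<close>)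
    have 6: "runs ?w (cstate (RC pc j False)) (Suc (Suc i) + length ?K + 4 + (m + 2)) [MvN] (cstate (RA pc (Suc j) False))
        (out @ [ST, One1] @ ?K @ [One1, EndN, Z, ST] @ replicate m One1 @ [EndN, Z])
        (out @ [ST, One1] @ ?K @ [One1, EndN, Z, ST] @ replicate m One1 @ [EndN, Z] @ [MvN])"
      by (rule runs_walk'[where L="\<lambda>k. [RC pc j False, RA pc (Suc j) False] ! k"]) (use A0 pc j in \<open>auto intro: on_tape_sub[OF A0, of "[ST, One1] @ ?K @ [EndN, Z, ST, One1] @ replicate m One1 @ [EndN, Z]" _ "[]"] simp: ctrl_trans_def\<close>)
    have "runs ?w (cstate (RA pc j False)) i ([ST, One1] @ ?K @ [EndN, Z, ST, One1] @ (replicate m One1 @ [EndN, Z]) @ [MvN]) (cstate (RA pc (Suc j) False)) out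
        (out @ [ST, One1] @ ?K @ [One1, EndN, Z, ST] @ replicate m One1 @ [EndN, Z] @ [MvN])"
      by (rule runs_append'[OF 1 _ runs_append'[OF 3 _ runs_append'[OF 4 _ runs_append'[OF 5 _ 6]]]]) simp_all
    then show ?thesis using Suc by (simp add: enc_reg_tuple replicate_shift)
  qed
qed

lemma reg_tuple_cong: "s j = s' j \<Longrightarrow> reg_tuple t s j = reg_tuple t s' j"
  by (simp add: reg_tuple_def)

lemma runs_reg_tuple:
  assumes pc: "pc < length prog" and j: "j < K" and ar: "areg (prog ! pc) < K"
    and A: "on_tape (sim_code g pc s0) i (enc_tuple (reg_tuple t s j))"
  shows "runs (sim_code g pc s0) (cstate (RA pc j (zero_seen pc s j))) i (enc_tuple (reg_tuple t s j)) (cstate (RA pc (Suc j) (zero_seen pc s (Suc j)))) out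
           (out @ enc_tuple (reg_tuple (Suc t) (next_regs pc s) j))"
proof (cases "j = areg (prog ! pc)")
  case False
  have z: "zero_seen pc s (Suc j) = zero_seen pc s j" using False by (auto simp: zero_seen_def)
  have n: "next_regs pc s j = s j" using False by (auto simp: next_regs_def split: instr.splits)
  show ?thesis using runs_reg_tuple_other[OF pc j False A, of "zero_seen pc s j" out] z reg_tuple_cong[of "next_regs pc s" j s "Suc t", OF n] by simp
next
  case True
  show ?thesis
  proof (cases "prog ! pc")
    case (Inc r)
    with True have r: "r = j" by simp
    have z: "zero_seen pc s j = False" "zero_seen pc s (Suc j) = False" using Inc by (auto simp: zero_seen_def)
    have n: "next_regs pc s = s(j := Suc (s j))" using Inc r by (simp add: next_regs_def)
    show ?thesis using runs_reg_tuple_Inc[OF pc j _ A, of out] Inc r z n by simp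
  next
    case (Dec r jj)
    with True have r: "r = j" by simp
    have z: "zero_seen pc s j = False" "zero_seen pc s (Suc j) = (s j = 0)" using Dec r by (auto simp: zero_seen_def)
    have n: "next_regs pc s = (if s j = 0 then s else s(j := s j - 1))" using Dec r by (simp add: next_regs_def)
    show ?thesis using runs_reg_tuple_Dec[OF pc j _ A, of jj out] Dec r z n by simp
  qed
qed

definition enc_regs :: "nat \<Rightarrow> regs \<Rightarrow> nat \<Rightarrow> sym list" where
  "enc_regs t s n = concat (map enc_tuple (map (reg_tuple t s) [0..<n]))"

lemma enc_regs_Suc: "enc_regs t s (Suc n) = enc_regs t s n @ enc_tuple (reg_tuple t s n)"
  by (simp add: enc_regs_def)

lemma enc_regs_split: "n < K \<Longrightarrow> enc_regs t s K = enc_regs t s n @ enc_tuple (reg_tuple t s n) @ concat (map enc_tuple (map (reg_tuple t s) [Suc n..<K]))"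
proof -
  assume n: "n < K"
  have "[0..<K] = [0..<n] @ [n..<K]" using upt_add_eq_append[of 0 n "K - n"] n by simp
  also have "[n..<K] = n # [Suc n..<K]" using n by (simp add: upt_conv_Cons)
  finally have "[0..<K] = [0..<n] @ [n] @ [Suc n..<K]" by simp
  then show ?thesis by (simp add: enc_regs_def)
qed

lemma runs_regs:
  assumes pc: "pc < length prog" and ar: "areg (prog ! pc) < K"
    and A: "on_tape (sim_code g pc s0) i (enc_regs t s K)"
  shows "n \<le> K \<Longrightarrow> runs (sim_code g pc s0) (cstate (RA pc 0 False)) i (enc_regs t s n) (cstate (RA pc n (zero_seen pc s n))) out
           (out @ enc_regs (Suc t) (next_regs pc s) n)"
proof (induction n)
  case 0 then show ?case by (simp add: enc_regs_def runs_def zero_seen_def)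
next
  case (Suc n)
  then have n: "n < K" by simp
  have An: "on_tape (sim_code g pc s0) (i + length (enc_regs t s n)) (enc_tuple (reg_tuple t s n))"
    by (rule on_tape_sub[OF A enc_regs_split[OF n]]) simp
  show ?case
    using runs_append'[OF Suc.IH[OF less_imp_le[OF n]] _ runs_reg_tuple[OF pc n ar An, of "out @ enc_regs (Suc t) (next_regs pc s) n"]]
    by (simp add: enc_regs_Suc)
qed

lemma runs_emit_suffix:
  assumes pc: "pc < length prog" and A: "on_tape (sim_code g pc s0) p [a]" and nb: "a \<noteq> Blank"
  shows "3 + start_len pc \<le> i \<Longrightarrow> i < length (start_rewrite pc z) \<Longrightarrow>
     runs (sim_code g pc s0) (cstate (LG pc z i)) p [] (cstate C0) out (out @ drop i (start_rewrite pc z))"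
proof (induction "length (start_rewrite pc z) - i" arbitrary: i out)
  case 0 then show ?case by simp
next
  case (Suc m)
  have i0: "0 < i" "i < 3 + start_len pc \<longleftrightarrow> False" using Suc.prems by auto
  show ?case
  proof (cases "Suc i < length (start_rewrite pc z)")
    case True
    have 1: "runs (sim_code g pc s0) (cstate (LG pc z i)) p [] (cstate (LG pc z (Suc i))) out (out @ [start_rewrite pc z ! i])"
      by (rule runs_ctrl_Stay'[OF A]) (use pc nb Suc.prems i0 True in \<open>auto simp: ctrl_trans_def\<close>)
    have m: "m = length (start_rewrite pc z) - Suc i" using Suc.hyps(2) by arith
    have 2: "runs (sim_code g pc s0) (cstate (LG pc z (Suc i))) p [] (cstate C0) (out @ [start_rewrite pc z ! i]) ((out @ [start_rewrite pc z ! i]) @ drop (Suc i) (start_rewrite pc z))"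
      by (rule Suc.hyps(1)[OF m]) (use Suc.prems True in simp_all)
    have "drop i (start_rewrite pc z) = start_rewrite pc z ! i # drop (Suc i) (start_rewrite pc z)" using Suc.prems by (simp add: Cons_nth_drop_Suc)
    then show ?thesis using runs_append'[OF 1 _ 2] by simp
  next
    case False
    then have last: "drop i (start_rewrite pc z) = [start_rewrite pc z ! i]" using Suc.prems
      by (metis Cons_nth_drop_Suc Suc_leI drop_all le_antisym not_less)
    have "runs (sim_code g pc s0) (cstate (LG pc z i)) p [] (cstate C0) out (out @ [start_rewrite pc z ! i])"
      by (rule runs_ctrl_Stay'[OF A]) (use pc nb Suc.prems i0 False in \<open>auto simp: ctrl_trans_def\<close>)
    then show ?thesis using last by simp
  qed
qed


lemma start_rewrite_split: "start_rewrite pc z = [start_rewrite pc z ! 0] @ take (2 + start_len pc) (drop 1 (start_rewrite pc z)) @ drop (3 + start_len pc) (start_rewrite pc z)"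
proof -
  have l: "3 + start_len pc < length (start_rewrite pc z)" by (rule start_rewrite_length)
  have e1: "start_rewrite pc z = take 1 (start_rewrite pc z) @ drop 1 (start_rewrite pc z)" by (rule append_take_drop_id[symmetric])
  have e2: "drop 1 (start_rewrite pc z) = take (2 + start_len pc) (drop 1 (start_rewrite pc z)) @ drop (2 + start_len pc) (drop 1 (start_rewrite pc z))"
    by (rule append_take_drop_id[symmetric])
  have e3: "drop (2 + start_len pc) (drop 1 (start_rewrite pc z)) = drop (3 + start_len pc) (start_rewrite pc z)" by (simp add: numeral_3_eq_3)
  have "start_rewrite pc z = take 1 (start_rewrite pc z) @ take (2 + start_len pc) (drop 1 (start_rewrite pc z)) @ drop (3 + start_len pc) (start_rewrite pc z)"
    using e1 e2 e3 by metis
  moreover have "take 1 (start_rewrite pc z) = [start_rewrite pc z ! 0]" using l by (cases "start_rewrite pc z") auto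
  ultimately show ?thesis by simp
qed

lemma runs_pad_start:
  assumes pc: "pc < length prog"
    and A: "on_tape (sim_code g pc s0) i (enc_tuple (pad_tuple u) @ enc_tuple (start_tuple pc) @ [SR])"
  shows "runs (sim_code g pc s0) (cstate (RA pc K z)) i (enc_tuple (pad_tuple u) @ enc_tuple (start_tuple pc)) (cstate C0) out
     (out @ enc_tuple (pad_tuple (u + start_len pc)) @ enc_tuple (start_tuple (next_pc pc z)))"
proof -
  let ?w = "sim_code g pc s0"
  let ?Q = "enc_tuple (start_tuple pc)"
  have ql: "length ?Q = start_len pc" by (simp add: start_len_def)
  have A': "on_tape ?w i ([SR, EndN, One1, ST] @ replicate u One1 @ [EndN] @ ([Z, MvN] @ ?Q) @ [SR])"
    using A by (simp add: enc_pad_tuple)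
  have 1: "runs ?w (cstate (RA pc K z)) i [SR, EndN, One1, ST] (cstate (H4 pc z)) out (out @ [SR, EndN, One1, ST])"
    by (rule runs_walk'[where L="\<lambda>k. [RA pc K z, H1 pc z, H2 pc z, H3 pc z, H4 pc z] ! k"])
      (use A' pc in \<open>auto intro: on_tape_sub[OF A', of "[]"] simp: ctrl_trans_def less_Suc_eq\<close>)
  have 2: "runs ?w (cstate (H4 pc z)) (i + 4) (replicate u One1) (cstate (H4 pc z)) (out @ [SR, EndN, One1, ST]) (out @ [SR, EndN, One1, ST] @ replicate u One1)"
    by (rule runs_ctrl_scan') (use A' pc in \<open>auto intro: on_tape_sub[OF A', of "[SR, EndN, One1, ST]"] simp: ctrl_trans_def\<close>)
  have 3: "runs ?w (cstate (H4 pc z)) (i + 4 + u) [EndN] (cstate (LG pc z 1)) (out @ [SR, EndN, One1, ST] @ replicate u One1)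
      (out @ [SR, EndN, One1, ST] @ replicate u One1 @ [start_rewrite pc z ! 0])"
    by (rule runs_walk'[where L="\<lambda>k. [H4 pc z, LG pc z 1] ! k"])
      (use A' pc in \<open>auto intro: on_tape_sub[OF A', of "[SR, EndN, One1, ST] @ replicate u One1"] simp: ctrl_trans_def\<close>)
  have 4: "runs ?w (cstate (LG pc z 1)) (i + 4 + u + 1) ([Z, MvN] @ ?Q) (cstate (LG pc z (3 + start_len pc)))
      (out @ [SR, EndN, One1, ST] @ replicate u One1 @ [start_rewrite pc z ! 0])
      (out @ [SR, EndN, One1, ST] @ replicate u One1 @ [start_rewrite pc z ! 0] @ take (2 + start_len pc) (drop 1 (start_rewrite pc z)))"
  proof (rule runs_walk'[where L="\<lambda>k. LG pc z (Suc k)"])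
    show "on_tape ?w (i + 4 + u + 1) ([Z, MvN] @ ?Q)"
      by (rule on_tape_sub[OF A', of "[SR, EndN, One1, ST] @ replicate u One1 @ [EndN]" _ "[SR]"]) simp_all
    show "\<forall>k<length ([Z, MvN] @ ?Q). LG pc z (Suc k) \<in> set ctrls \<and>
        ctrl_trans (LG pc z (Suc k)) (([Z, MvN] @ ?Q) ! k) = Some (cstate (LG pc z (Suc (Suc k))), take (2 + start_len pc) (drop 1 (start_rewrite pc z)) ! k, Rgt)"
    proof (intro allI impI)
      fix k assume k: "k < length ([Z, MvN] @ ?Q)"
      have l: "3 + start_len pc < length (start_rewrite pc z)" by (rule start_rewrite_length)
      have nb: "([Z, MvN] @ ?Q) ! k \<noteq> Blank"
        using k nth_mem[OF k] by (auto simp: enc_start_tuple)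
      show "LG pc z (Suc k) \<in> set ctrls \<and>
        ctrl_trans (LG pc z (Suc k)) (([Z, MvN] @ ?Q) ! k) = Some (cstate (LG pc z (Suc (Suc k))), take (2 + start_len pc) (drop 1 (start_rewrite pc z)) ! k, Rgt)"
        using k l pc nb ql by (auto simp: ctrl_trans_def)
    qed
  qed (use ql start_rewrite_length[of pc z] in simp_all)
  have 5: "runs ?w (cstate (LG pc z (3 + start_len pc))) (i + 4 + u + 1 + (2 + start_len pc)) [] (cstate C0)
      (out @ [SR, EndN, One1, ST] @ replicate u One1 @ [start_rewrite pc z ! 0] @ take (2 + start_len pc) (drop 1 (start_rewrite pc z)))
      ((out @ [SR, EndN, One1, ST] @ replicate u One1 @ [start_rewrite pc z ! 0] @ take (2 + start_len pc) (drop 1 (start_rewrite pc z))) @ drop (3 + start_len pc) (start_rewrite pc z))"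
  proof (rule runs_emit_suffix[OF pc _ _ order_refl start_rewrite_length])
    show "on_tape ?w (i + 4 + u + 1 + (2 + start_len pc)) [SR]"
      by (rule on_tape_sub[OF A', of "[SR, EndN, One1, ST] @ replicate u One1 @ [EndN] @ ([Z, MvN] @ ?Q)" _ "[]"]) (simp_all add: ql)
  qed simp
  have C: "runs ?w (cstate (RA pc K z)) i ([SR, EndN, One1, ST] @ replicate u One1 @ [EndN] @ ([Z, MvN] @ ?Q) @ []) (cstate C0) out
      ((out @ [SR, EndN, One1, ST] @ replicate u One1 @ [start_rewrite pc z ! 0] @ take (2 + start_len pc) (drop 1 (start_rewrite pc z))) @ drop (3 + start_len pc) (start_rewrite pc z))"
    by (rule runs_append'[OF 1 _ runs_append'[OF 2 _ runs_append'[OF 3 _ runs_append'[OF 4 _ 5]]]]) (simp_all add: ql)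
  have R: "[start_rewrite pc z ! 0] @ take (2 + start_len pc) (drop 1 (start_rewrite pc z)) @ drop (3 + start_len pc) (start_rewrite pc z) = start_rewrite pc z"
    using start_rewrite_split by metis
  have X: "runs ?w (cstate (RA pc K z)) i ([SR, EndN, One1, ST] @ replicate u One1 @ [EndN] @ ([Z, MvN] @ ?Q) @ []) (cstate C0) out
      (out @ [SR, EndN, One1, ST] @ replicate u One1 @ start_rewrite pc z)"
    using C unfolding append_assoc R .
  show ?thesis using X
    by (simp add: enc_pad_tuple start_rewrite_def replicate_add start_len_def)
qed

lemma enc_move_not_Blank: "enc_move d \<noteq> Blank" by (cases d) auto

lemma runs_copy_tuple:
  assumes t: "t \<in> set ctrl_tuples" and A: "on_tape (sim_code g pc s0) i (enc_tuple t)"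
  shows "runs (sim_code g pc s0) (cstate C0) i (enc_tuple t) (cstate C0) out (out @ enc_tuple t)"
proof -
  let ?w = "sim_code g pc s0"
  obtain l a q' b d where td: "t = (cstate l, a, q', b, d)" "ctrl_trans l a = Some (q', b, d)" using ctrl_tuples_mem[OF t] by blast
  obtain n' f' where q': "q' = (n', f')" by (cases q')
  have anb: "a \<noteq> Blank" using td(2) by (auto simp: ctrl_trans_def)
  have bnb: "b \<noteq> Blank" using ctrl_trans_not_Blank[OF td(2)] .
  let ?fl = "if f' then SR else ST"
  let ?L = "replicate (to_nat l) One1"
  let ?N = "replicate n' One1"
  have e: "enc_tuple t = [SR, One1] @ ?L @ [EndN, a, ?fl] @ ?N @ [EndN, b, enc_move d]"
    by (simp add: td q' cstate_def)
  have A': "on_tape ?w i ([SR, One1] @ ?L @ [EndN, a, ?fl] @ ?N @ [EndN, b, enc_move d])" using A e by simp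
  have 1: "runs ?w (cstate C0) i [SR, One1] (cstate C1) out (out @ [SR, One1])"
    by (rule runs_walk'[where L="\<lambda>k. [C0, C1f, C1] ! k"]) (use A' in \<open>auto intro: on_tape_sub[OF A', of "[]"] simp: ctrl_trans_def less_Suc_eq\<close>)
  have 2: "runs ?w (cstate C1) (i + 2) ?L (cstate C1) (out @ [SR, One1]) (out @ [SR, One1] @ ?L)"
    by (rule runs_ctrl_scan') (use A' in \<open>auto intro: on_tape_sub[OF A', of "[SR, One1]"] simp: ctrl_trans_def\<close>)
  have 3: "runs ?w (cstate C1) (i + 2 + to_nat l) [EndN, a, ?fl] (cstate C4) (out @ [SR, One1] @ ?L) (out @ [SR, One1] @ ?L @ [EndN, a, ?fl])"
    by (rule runs_walk'[where L="\<lambda>k. [C1, C2, C3, C4] ! k"]) (use A' anb in \<open>auto intro: on_tape_sub[OF A', of "[SR, One1] @ ?L"] simp: ctrl_trans_def less_Suc_eq\<close>)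
  have 4: "runs ?w (cstate C4) (i + 2 + to_nat l + 3) ?N (cstate C4) (out @ [SR, One1] @ ?L @ [EndN, a, ?fl]) (out @ [SR, One1] @ ?L @ [EndN, a, ?fl] @ ?N)"
    by (rule runs_ctrl_scan') (use A' in \<open>auto intro: on_tape_sub[OF A', of "[SR, One1] @ ?L @ [EndN, a, ?fl]"] simp: ctrl_trans_def\<close>)
  have 5: "runs ?w (cstate C4) (i + 2 + to_nat l + 3 + n') [EndN, b, enc_move d] (cstate C0) (out @ [SR, One1] @ ?L @ [EndN, a, ?fl] @ ?N)
       (out @ [SR, One1] @ ?L @ [EndN, a, ?fl] @ ?N @ [EndN, b, enc_move d])"
    by (rule runs_walk'[where L="\<lambda>k. [C4, C5, C6, C0] ! k"]) (use A' bnb enc_move_not_Blank in \<open>auto intro: on_tape_sub[OF A', of "[SR, One1] @ ?L @ [EndN, a, ?fl] @ ?N"] simp: ctrl_trans_def less_Suc_eq\<close>)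
  have "runs ?w (cstate C0) i ([SR, One1] @ ?L @ [EndN, a, ?fl] @ ?N @ [EndN, b, enc_move d]) (cstate C0) out
      (out @ [SR, One1] @ ?L @ [EndN, a, ?fl] @ ?N @ [EndN, b, enc_move d])"
    by (rule runs_append'[OF 1 _ runs_append'[OF 2 _ runs_append'[OF 3 _ runs_append'[OF 4 _ 5]]]]) simp_all
  then show ?thesis using e by simp
qed

lemma runs_copy_ctrl_tuples:
  "set ts \<subseteq> set ctrl_tuples \<Longrightarrow> on_tape (sim_code g pc s0) i (concat (map enc_tuple ts)) \<Longrightarrow>
   runs (sim_code g pc s0) (cstate C0) i (concat (map enc_tuple ts)) (cstate C0) out (out @ concat (map enc_tuple ts))"
proof (induction ts arbitrary: i out)
  case Nil then show ?case by (simp add: runs_def)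
next
  case (Cons t ts)
  have 1: "runs (sim_code g pc s0) (cstate C0) i (enc_tuple t) (cstate C0) out (out @ enc_tuple t)"
    by (rule runs_copy_tuple) (use Cons.prems in \<open>auto intro: on_tape_sub[OF Cons.prems(2), of "[]"]\<close>)
  have 2: "runs (sim_code g pc s0) (cstate C0) (i + length (enc_tuple t)) (concat (map enc_tuple ts)) (cstate C0) (out @ enc_tuple t)
     ((out @ enc_tuple t) @ concat (map enc_tuple ts))"
    by (rule Cons.IH) (use Cons.prems in \<open>auto intro: on_tape_sub[OF Cons.prems(2), of "enc_tuple t" _ "[]"]\<close>)
  show ?case using runs_append'[OF 1 _ 2] by simp
qed

lemma split_at_end_tuple:
  assumes A: "on_tape (sim_code g pc s0) i (enc_tuple end_tuple)"
  shows "\<exists>c. (step_nq (sim_code g pc s0))\<^sup>*\<^sup>* (cstate C0, i, out) c \<and> step (sim_code g pc s0) c (q1, i + 6, out @ enc_tuple end_tuple)"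
proof -
  let ?w = "sim_code g pc s0"
  have A': "on_tape ?w i ([SR, EndN, EndN, SR, EndN, Z] @ [MvN])" using A by (simp add: enc_end_tuple)
  have 1: "runs ?w (cstate C0) i [SR, EndN, EndN, SR, EndN, Z] (cstate E6) out (out @ [SR, EndN, EndN, SR, EndN, Z])"
    by (rule runs_walk'[where L="\<lambda>k. [C0, C1f, E2, E3, E4, E5, E6] ! k"]) (use A' in \<open>auto intro: on_tape_sub[OF A', of "[]"] simp: ctrl_trans_def less_Suc_eq\<close>)
  have a: "on_tape ?w (i + 6) [MvN]" by (rule on_tape_sub[OF A', of "[SR, EndN, EndN, SR, EndN, Z]" _ "[]"]) simp_all
  have ht: "has_tuple ?w (cstate E6, MvN, q1, MvN, Stay)" by (rule has_tuple_ctrl) (simp_all add: ctrl_trans_def)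
  have "step ?w (cstate E6, i + 6, out @ [SR, EndN, EndN, SR, EndN, Z]) (q1, i + 6, (out @ [SR, EndN, EndN, SR, EndN, Z]) @ [MvN])"
    using on_tape_nth[OF a] ht unfolding step_def
    by (simp only: split) (rule exI[of _ MvN], rule exI[of _ MvN], rule exI[of _ Stay], simp)
  moreover have "(step_nq ?w)\<^sup>*\<^sup>* (cstate C0, i, out) (cstate E6, i + 6, out @ [SR, EndN, EndN, SR, EndN, Z])"
    using 1 unfolding runs_def by (simp add: eval_nat_numeral)
  ultimately show ?thesis unfolding enc_end_tuple by (intro exI[of _ "(cstate E6, i + 6, out @ [SR, EndN, EndN, SR, EndN, Z])"]) simp
qed

lemma ctrl_tuples_end_SR: "\<exists>r. concat (map enc_tuple ctrl_tuples) @ enc_tuple end_tuple = SR # r"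
proof (cases ctrl_tuples)
  case Nil then show ?thesis by (simp add: enc_end_tuple)
next
  case (Cons t ts)
  then have "t \<in> set ctrl_tuples" by simp
  then obtain l a q' b d where "t = (cstate l, a, q', b, d)" using ctrl_tuples_mem by blast
  then show ?thesis using Cons by (simp add: cstate_def)
qed

lemma one_generation:
  assumes pc: "pc < length prog" and ar: "areg (prog ! pc) < K"
  shows "\<exists>c i. (step_nq (sim_code (tj, t, u) pc s))\<^sup>*\<^sup>* (q0, 0, []) c \<and>
     step (sim_code (tj, t, u) pc s) c (q1, i, sim_code (Suc tj, Suc t, u + start_len pc) (next_pc pc (zero_seen pc s K)) (next_regs pc s))"
proof -
  let ?w = "sim_code (tj, t, u) pc s"
  let ?J = "enc_tuple (gen_tuple tj)"
  let ?R = "enc_regs t s K"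
  let ?P = "enc_tuple (pad_tuple u)"
  let ?Q = "enc_tuple (start_tuple pc)"
  let ?C = "concat (map enc_tuple ctrl_tuples)"
  let ?E = "enc_tuple end_tuple"
  let ?z = "zero_seen pc s K"
  let ?O1 = "enc_tuple (gen_tuple (Suc tj)) @ enc_regs (Suc t) (next_regs pc s) K"
  let ?O2 = "?O1 @ enc_tuple (pad_tuple (u + start_len pc)) @ enc_tuple (start_tuple (next_pc pc ?z))"
  have A: "on_tape ?w (Suc 0) (?J @ ?R @ ?P @ ?Q @ ?C @ ?E)"
    using on_tape_code[of ?w] by (simp add: sim_code_split enc_regs_def)
  obtain r where r: "?C @ ?E = SR # r" using ctrl_tuples_end_SR by blast
  have "has_tuple ?w (q0, Z, cstate (LI pc), Z, Stay)"
    by (simp add: has_tuple_sim_code sim_tuples_def start_tuple_def)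
  then have start: "step_nq ?w (q0, 0, []) (cstate (LI pc), 0, [])"
    unfolding step_nq_def step_def by (auto simp: q0_def)
  have 1: "runs ?w (cstate (LI pc)) 0 ([LEnd] @ ?J) (cstate (RA pc 0 False)) [] (enc_tuple (gen_tuple (Suc tj)))"
    by (rule runs_gen_tuple[OF pc])
  have 2: "runs ?w (cstate (RA pc 0 False)) (Suc (length ?J)) ?R (cstate (RA pc K ?z)) (enc_tuple (gen_tuple (Suc tj))) ?O1"
    by (rule runs_regs[OF pc ar _ order_refl]) (rule on_tape_sub[OF A, of "?J" _ "?P @ ?Q @ ?C @ ?E"], simp_all)
  have "on_tape ?w (Suc (length ?J) + length ?R) (?P @ ?Q @ [SR])"
    by (rule on_tape_sub[OF A, of "?J @ ?R" _ r]) (simp_all add: r)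
  then have 3: "runs ?w (cstate (RA pc K ?z)) (Suc (length ?J) + length ?R) (?P @ ?Q) (cstate C0) ?O1 ?O2"
    by (rule runs_pad_start[OF pc])
  have 4: "runs ?w (cstate C0) (Suc (length ?J) + length ?R + length (?P @ ?Q)) ?C (cstate C0) ?O2 (?O2 @ ?C)"
    by (rule runs_copy_ctrl_tuples) (auto intro: on_tape_sub[OF A, of "?J @ ?R @ ?P @ ?Q" _ "?E"])
  have "on_tape ?w (Suc (length ?J) + length ?R + length (?P @ ?Q) + length ?C) ?E"
    by (rule on_tape_sub[OF A, of "?J @ ?R @ ?P @ ?Q @ ?C" _ "[]"]) simp_all
  from split_at_end_tuple[OF this, of "?O2 @ ?C"] obtain c where
    c: "(step_nq ?w)\<^sup>*\<^sup>* (cstate C0, Suc (length ?J) + length ?R + length (?P @ ?Q) + length ?C, ?O2 @ ?C) c"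
      "step ?w c (q1, Suc (length ?J) + length ?R + length (?P @ ?Q) + length ?C + 6, (?O2 @ ?C) @ ?E)"
    by blast
  have "runs ?w (cstate (LI pc)) 0 (([LEnd] @ ?J) @ ?R @ (?P @ ?Q) @ ?C) (cstate C0) [] (?O2 @ ?C)"
    by (rule runs_append'[OF 1 _ runs_append'[OF 2 _ runs_append'[OF 3 _ 4]]]) simp_all
  with start c(1) have "(step_nq ?w)\<^sup>*\<^sup>* (q0, 0, []) c"
    unfolding runs_def by (simp add: add.assoc)
  moreover have "sim_code (Suc tj, Suc t, u + start_len pc) (next_pc pc ?z) (next_regs pc s) = (?O2 @ ?C) @ ?E"
    by (simp add: sim_code_split enc_regs_def)
  ultimately show ?thesis using c(2) by metis
qed


section \<open>Lineages of the simulator\<close>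

lemma halted_no_offspring:
  assumes pc: "\<not> pc < length prog"
  shows "\<not> offspring (sim_code g pc s) w'"
proof
  assume "offspring (sim_code g pc s) w'"
  then obtain c i where p: "(step_nq (sim_code g pc s))\<^sup>*\<^sup>* (q0, 0, []) c" "step (sim_code g pc s) c (q1, i, w')"
    unfolding offspring_def by blast
  have s0: "step_nq (sim_code g pc s) (q0, 0, []) (cstate (LI pc), 0, [])"
  proof -
    have "has_tuple (sim_code g pc s) (q0, Z, cstate (LI pc), Z, Stay)"
      by (cases g) (simp add: has_tuple_sim_code sim_tuples_def start_tuple_def)
    then show ?thesis unfolding step_nq_def step_def by (auto simp: q0_def)
  qed
  have nostep: "\<not> step (sim_code g pc s) (cstate (LI pc), 0, []) c'" for c'
  proof
    assume "step (sim_code g pc s) (cstate (LI pc), 0, []) c'"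
    then obtain a q' b d where "has_tuple (sim_code g pc s) (cstate (LI pc), a, q', b, d)"
      unfolding step_def by (auto split: prod.splits)
    then have "ctrl_trans (LI pc) a = Some (q', b, d)" by (rule has_tuple_cstate_ctrl)
    then show False using pc by (simp add: ctrl_trans_def split: if_splits)
  qed
  show False
    by (rule stuck_no_q1[OF proper_sim_code r_into_rtranclp[of "step_nq (sim_code g pc s)", OF s0] nostep p])
qed

definition next_gen :: "nat \<Rightarrow> nat \<times> nat \<times> nat \<Rightarrow> nat \<times> nat \<times> nat" where
  "next_gen pc g = (case g of (tj, t, u) \<Rightarrow> (Suc tj, Suc t, u + start_len pc))"

lemma cstep_next:
  assumes "cstep prog (pc, s) (pc', s')" "areg (prog ! pc) < K"
  shows "pc < length prog" "pc' = next_pc pc (zero_seen pc s K)" "s' = next_regs pc s"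
  using assms by (auto simp: cstep_def next_pc_def zero_seen_def next_regs_def split: instr.splits if_splits)

lemma offspring_step:
  assumes "cstep prog (pc, s) (pc', s')" "areg (prog ! pc) < K"
  shows "offspring (sim_code g pc s) (sim_code (next_gen pc g) pc' s')"
proof -
  obtain tj t u where g: "g = (tj, t, u)" by (cases g) auto
  from cstep_next[OF assms] one_generation[of pc tj t u s] assms(2) show ?thesis
    unfolding offspring_def by (auto simp: g next_gen_def proper_sim_code)
qed

lemma offspring_unique:
  assumes "cstep prog (pc, s) (pc', s')" "areg (prog ! pc) < K" "offspring (sim_code g pc s) w'"
  shows "w' = sim_code (next_gen pc g) pc' s'"
proof -
  obtain tj t u where g: "g = (tj, t, u)" by (cases g) auto
  from offspring_step[OF assms(1,2), of g] obtain c1 i1 where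
    p1: "(step_nq (sim_code g pc s))\<^sup>*\<^sup>* (q0, 0, []) c1" "step (sim_code g pc s) c1 (q1, i1, sim_code (next_gen pc g) pc' s')"
    unfolding offspring_def by blast
  from assms(3) obtain c2 i2 where p2: "(step_nq (sim_code g pc s))\<^sup>*\<^sup>* (q0, 0, []) c2" "step (sim_code g pc s) c2 (q1, i2, w')"
    unfolding offspring_def by blast
  show ?thesis by (rule first_q1_unique[OF proper_sim_code p1 p2])
qed

lemma infinite_lineage_Cons:
  assumes "offspring w w'" and "infinite_lineage w'"
  shows "infinite_lineage w"
proof -
  from assms(2) obtain A where "A 0 = w'" "\<forall>n. offspring (A n) (A (Suc n))"
    unfolding infinite_lineage_def by blast
  with assms(1) show ?thesis
    unfolding infinite_lineage_def by (intro exI[of _ "case_nat w A"]) (auto split: nat.split)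
qed

lemma infinite_lineage_tl:
  assumes "infinite_lineage w"
  obtains w' where "offspring w w'" "infinite_lineage w'"
proof -
  from assms obtain A where A: "A 0 = w" "\<forall>n. offspring (A n) (A (Suc n))"
    unfolding infinite_lineage_def by blast
  have "infinite_lineage (A (Suc 0))"
    unfolding infinite_lineage_def using A(2) by (intro exI[of _ "\<lambda>n. A (Suc n)"]) simp
  with A show ?thesis using that by metis
qed

lemma infinite_lineage_if_loops:
  assumes ar: "\<forall>pc<length prog. areg (prog ! pc) < K"
    and loop: "cstep prog (pc', s') (pc', s')"
    and reach: "(cstep prog)\<^sup>*\<^sup>* (pc, s) (pc', s')"
  shows "infinite_lineage (sim_code g pc s)"
  using reach
proof (induction arbitrary: g rule: converse_rtranclp_induct2)
  case refl
  have ar': "areg (prog ! pc') < K" using ar loop by (simp add: cstep_def)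
  define G where "G n = (next_gen pc' ^^ n) g" for n
  have "offspring (sim_code (G n) pc' s') (sim_code (G (Suc n)) pc' s')" for n
    using offspring_step[OF loop ar'] by (simp add: G_def)
  then show ?case
    unfolding infinite_lineage_def by (intro exI[of _ "\<lambda>n. sim_code (G n) pc' s'"]) (simp add: G_def)
next
  case (step pc s pc'' s'')
  have "areg (prog ! pc) < K" using ar step.hyps(1) by (simp add: cstep_def)
  from offspring_step[OF step.hyps(1) this] step.IH show ?case
    by (rule infinite_lineage_Cons)
qed

lemma finite_lineage_if_halts:
  assumes ar: "\<forall>pc<length prog. areg (prog ! pc) < K"
    and halt: "\<not> pc' < length prog"
    and reach: "(cstep prog)\<^sup>*\<^sup>* (pc, s) (pc', s')"
  shows "\<not> infinite_lineage (sim_code g pc s)"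
  using reach
proof (induction arbitrary: g rule: converse_rtranclp_induct2)
  case refl
  show ?case using halted_no_offspring[OF halt] by (metis infinite_lineage_tl)
next
  case (step pc s pc'' s'')
  have "areg (prog ! pc) < K" using ar step.hyps(1) by (simp add: cstep_def)
  with step show ?case
    by (metis infinite_lineage_tl offspring_unique)
qed
end


section \<open>Computing the number of the initial code\<close>

lemma word_num_append: "word_num (u @ v) = word_num u + 11 ^ length u * word_num v"
  by (induction u) (auto simp: algebra_simps)

fun constf :: "nat \<Rightarrow> recf" where
  "constf 0 = Zr" | "constf (Suc c) = Cn 1 Sc [constf c]"

lemma ev_const: "rec_eval (constf c) [x] c"
  by (induction c) (auto intro: rec_eval.intros)

definition idf :: recf where "idf = Id 1 0"
lemma ev_id: "rec_eval idf [x] x"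
  using rec_eval.ev_Id[of 0 1 "[x]"] by (simp add: idf_def)

definition addf :: recf where "addf = Pr 1 (Id 1 0) (Cn 3 Sc [Id 3 1])"
lemma ev_add: "rec_eval addf [x, y] (x + y)"
proof (induction x)
  case 0
  have "rec_eval (Id 1 0) [y] y" using rec_eval.ev_Id[of 0 1 "[y]"] by simp
  then show ?case unfolding addf_def using rec_eval.ev_Pr0[of "[y]" 1 "Id 1 0" y "Cn 3 Sc [Id 3 1]"] by simp
next
  case (Suc x)
  have "rec_eval (Id 3 1) [x, x + y, y] (x + y)" using rec_eval.ev_Id[of 1 3 "[x, x + y, y]"] by simp
  then have "rec_eval (Cn 3 Sc [Id 3 1]) [x, x + y, y] (Suc (x + y))"
    by (intro rec_eval.ev_Cn[where ys = "[x + y]"]) (auto intro: rec_eval.intros)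
  then show ?case using Suc unfolding addf_def by (auto intro: rec_eval.ev_PrS)
qed

definition mulf :: recf where "mulf = Pr 1 Zr (Cn 3 addf [Id 3 1, Id 3 2])"
lemma ev_mul: "rec_eval mulf [x, y] (x * y)"
proof (induction x)
  case 0
  show ?case unfolding mulf_def using rec_eval.ev_Pr0[of "[y]" 1 Zr 0] by (auto intro: rec_eval.intros)
next
  case (Suc x)
  have a: "rec_eval (Id 3 1) [x, x * y, y] (x * y)" using rec_eval.ev_Id[of 1 3 "[x, x * y, y]"] by simp
  have b: "rec_eval (Id 3 2) [x, x * y, y] y" using rec_eval.ev_Id[of 2 3 "[x, x * y, y]"] by simp
  have "rec_eval (Cn 3 addf [Id 3 1, Id 3 2]) [x, x * y, y] (x * y + y)"
    by (rule rec_eval.ev_Cn[where ys = "[x * y, y]"]) (use a b ev_add in auto)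
  then show ?case using Suc unfolding mulf_def by (auto intro: rec_eval.ev_PrS simp: add.commute)
qed

lemma ev_comp2: "rec_eval G1 [a] v1 \<Longrightarrow> rec_eval G2 [a] v2 \<Longrightarrow> rec_eval F [v1, v2] z \<Longrightarrow> rec_eval (Cn 1 F [G1, G2]) [a] z"
  by (rule rec_eval.ev_Cn[where ys = "[v1, v2]"]) auto

lemma ev_comp1: "rec_eval G1 [a] v1 \<Longrightarrow> rec_eval F [v1] z \<Longrightarrow> rec_eval (Cn 1 F [G1]) [a] z"
  by (rule rec_eval.ev_Cn[where ys = "[v1]"]) auto

definition iterf :: "nat \<Rightarrow> recf \<Rightarrow> recf" where
  "iterf c0 g = Cn 1 (Pr 1 (constf c0) (Cn 3 g [Id 3 1])) [Id 1 0, Id 1 0]"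

lemma ev_iter:
  assumes g: "\<And>y. rec_eval g [y] (G y)"
  shows "rec_eval (iterf c0 g) [a] ((G ^^ a) c0)"
proof -
  have pr: "rec_eval (Pr 1 (constf c0) (Cn 3 g [Id 3 1])) [x, d] ((G ^^ x) c0)" for x d
  proof (induction x)
    case 0 then show ?case using rec_eval.ev_Pr0[of "[d]" 1 "constf c0" c0] ev_const by simp
  next
    case (Suc x)
    have a: "rec_eval (Id 3 1) [x, (G ^^ x) c0, d] ((G ^^ x) c0)" using rec_eval.ev_Id[of 1 3 "[x, (G ^^ x) c0, d]"] by simp
    have "rec_eval (Cn 3 g [Id 3 1]) [x, (G ^^ x) c0, d] (G ((G ^^ x) c0))"
      by (rule rec_eval.ev_Cn[where ys = "[(G ^^ x) c0]"]) (use a g in auto)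
    then show ?case using Suc by (auto intro: rec_eval.ev_PrS)
  qed
  have i: "rec_eval (Id 1 0) [a] a" using rec_eval.ev_Id[of 0 1 "[a]"] by simp
  show ?thesis unfolding iterf_def by (rule ev_comp2[OF i i pr])
qed

definition plusf :: "recf \<Rightarrow> recf \<Rightarrow> recf" where "plusf F G = Cn 1 addf [F, G]"
definition timesf :: "recf \<Rightarrow> recf \<Rightarrow> recf" where "timesf F G = Cn 1 mulf [F, G]"

lemma ev_plus: "rec_eval F [a] x \<Longrightarrow> rec_eval G [a] y \<Longrightarrow> rec_eval (plusf F G) [a] (x + y)"
  unfolding plusf_def by (rule ev_comp2[OF _ _ ev_add])

lemma ev_times: "rec_eval F [a] x \<Longrightarrow> rec_eval G [a] y \<Longrightarrow> rec_eval (timesf F G) [a] (x * y)"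
  unfolding timesf_def by (rule ev_comp2[OF _ _ ev_mul])

definition pow11f :: recf where "pow11f = iterf 1 (timesf (constf 11) idf)"

lemma ev_pow11: "rec_eval pow11f [a] (11 ^ a)"
proof -
  have "rec_eval (timesf (constf 11) idf) [y] ((\<lambda>y. 11 * y) y)" for y
    by (intro ev_times ev_const ev_id)
  moreover have "((\<lambda>y. 11 * y) ^^ a) 1 = (11::nat) ^ a" by (induction a) auto
  ultimately show ?thesis using ev_iter unfolding pow11f_def by metis
qed

definition repf :: recf where "repf = iterf 0 (plusf (constf 2) (timesf (constf 11) idf))"

lemma ev_rep: "rec_eval repf [a] (word_num (replicate a One1))"
proof -
  have "rec_eval (plusf (constf 2) (timesf (constf 11) idf)) [y] ((\<lambda>y. 2 + 11 * y) y)" for y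
    by (intro ev_plus ev_times ev_const ev_id)
  moreover have "((\<lambda>y. 2 + 11 * y) ^^ a) 0 = word_num (replicate a One1)" by (induction a) auto
  ultimately show ?thesis using ev_iter unfolding repf_def by metis
qed

definition init_prefix :: "nat \<Rightarrow> sym list" where
  "init_prefix a = enc_tuple (gen_tuple 0) @ enc_tuple (reg_tuple 0 (\<lambda>r. if r = 0 then a else 0) 0)"

definition init_num :: "nat \<Rightarrow> nat" where
  "init_num a = word_num (init_prefix a) + 11 ^ length (init_prefix a) * a"

definition init_head_num :: nat where "init_head_num = word_num [SR, EndN, Z, ST, EndN, Z, MvN, ST, One1, EndN, Z, ST]"
definition init_tail_num :: nat where "init_tail_num = word_num [EndN, Z, MvN]"

lemma init_num_eq:
  "init_num a = init_head_num + (11^12 * word_num (replicate a One1) + (init_tail_num * 11^12 * 11^a + 11^15 * 11^a * a))"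
proof -
  have prefix: "init_prefix a = [SR, EndN, Z, ST, EndN, Z, MvN, ST, One1, EndN, Z, ST] @ replicate a One1 @ [EndN, Z, MvN]"
    by (simp add: init_prefix_def enc_gen_tuple enc_reg_tuple)
  have "word_num (init_prefix a) = init_head_num + 11^12 * (word_num (replicate a One1) + 11^a * init_tail_num)"
    unfolding prefix word_num_append init_head_num_def init_tail_num_def by simp
  moreover have "length (init_prefix a) = 15 + a" by (simp add: prefix)
  ultimately show ?thesis unfolding init_num_def by (simp add: algebra_simps power_add)
qed

definition init_numf :: recf where
  "init_numf = plusf (constf init_head_num) (plusf (timesf (constf (11^12)) repf)
     (plusf (timesf (constf (init_tail_num * 11^12)) pow11f) (timesf (timesf (constf (11^15)) pow11f) idf)))"

lemma ev_init_num: "rec_eval init_numf [a] (init_num a)"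
  unfolding init_numf_def init_num_eq by (intro ev_plus ev_times ev_const ev_rep ev_pow11 ev_id)


section \<open>Undecidability\<close>

definition max_reg :: "instr list \<Rightarrow> nat" where "max_reg p = foldr (\<lambda>i m. max (areg i) m) p 0"

lemma areg_less_Suc_max_reg: "\<forall>pc<length p. areg (p ! pc) < Suc (max_reg p)"
proof -
  have "i \<in> set p \<Longrightarrow> areg i \<le> max_reg p" for i
    by (induction p) (auto simp: max_reg_def)
  then show ?thesis by (simp add: less_Suc_eq_le)
qed

lemma reaches_compile_unary:
  assumes "rec_eval H [a] v"
  shows "reaches (compile H [0] 2 3) (\<lambda>r. if r = 0 then a else 0) ((\<lambda>r. if r = 0 then a else 0)(2 := v))"
  by (rule compile_correctD[OF compile_correct_all assms]) auto

text \<open>The fixed point of the diagonal argument: register 0 holds the number of the part of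
  the code that follows its own register tuple.\<close>
lemma self_encoding_initial_code:
  assumes "0 < K"
  obtains a where
    "word_num (simulator.sim_code prog K (0, 0, 0) 0 (\<lambda>r. if r = 0 then a else 0)) = init_num a"
proof
  define Rest where "Rest = concat (map enc_tuple (map (reg_tuple 0 (\<lambda>_. 0)) [1..<K])) @
     enc_tuple (pad_tuple 0) @ enc_tuple (start_tuple 0) @
     concat (map enc_tuple (simulator.ctrl_tuples prog K)) @ enc_tuple end_tuple"
  define a where "a = word_num Rest"
  define s where "s = (\<lambda>r::nat. if r = 0 then a else 0)"
  have regs: "map (reg_tuple 0 s) [0..<K] = reg_tuple 0 s 0 # map (reg_tuple 0 (\<lambda>_. 0)) [1..<K]"
    using assms by (auto simp: upt_conv_Cons reg_tuple_def s_def)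
  have "simulator.sim_code prog K (0, 0, 0) 0 s = init_prefix a @ Rest"
    unfolding simulator.sim_code_split regs by (simp add: Rest_def init_prefix_def s_def)
  then show "word_num (simulator.sim_code prog K (0, 0, 0) 0 (\<lambda>r. if r = 0 then a else 0)) = init_num a"
    unfolding s_def init_num_def a_def by (simp add: word_num_append)
qed

lemma lineage_of_guarded_program:
  assumes ar: "\<forall>pc<length (cp @ [Dec 2 (length cp)]). areg ((cp @ [Dec 2 (length cp)]) ! pc) < K"
    and run: "reaches cp s (s(2 := v))"
  shows "infinite_lineage (simulator.sim_code (cp @ [Dec 2 (length cp)]) K g 0 s) \<longleftrightarrow> v = 0"
proof -
  let ?prog = "cp @ [Dec 2 (length cp)]"
  have to_guard: "(cstep ?prog)\<^sup>*\<^sup>* (0, s) (length cp, s(2 := v))"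
    using reaches_embed[OF run, of "[]" "[Dec 2 (length cp)]"] by simp
  show ?thesis
  proof (cases "v = 0")
    case True
    have "cstep ?prog (length cp, s(2 := v)) (length cp, s(2 := v))"
      using True by (simp add: cstep_def)
    with simulator.infinite_lineage_if_loops[OF ar this to_guard] True show ?thesis by simp
  next
    case False
    have "cstep ?prog (length cp, s(2 := v)) (length ?prog, s(2 := v - 1))"
      using False by (simp add: cstep_def)
    with to_guard have "(cstep ?prog)\<^sup>*\<^sup>* (0, s) (length ?prog, s(2 := v - 1))" by simp
    with simulator.finite_lineage_if_halts[OF ar _ this] False show ?thesis by simp
  qed
qed

theorem theorem4:
  shows "\<not> (\<exists>f :: recf. \<forall>w. proper_code w \<longrightarrow>
            rec_eval f [word_num w] (if infinite_lineage w then 1 else 0))"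
proof
  assume "\<exists>f :: recf. \<forall>w. proper_code w \<longrightarrow> rec_eval f [word_num w] (if infinite_lineage w then 1 else 0)"
  then obtain f where decides:
    "\<And>w. proper_code w \<Longrightarrow> rec_eval f [word_num w] (if infinite_lineage w then 1 else 0)"
    by blast
  define cp where "cp = compile (Cn 1 f [init_numf]) [0] 2 3"
  define prog where "prog = cp @ [Dec 2 (length cp)]"
  define K where "K = Suc (max_reg prog)"
  obtain a where a: "word_num (simulator.sim_code prog K (0, 0, 0) 0 (\<lambda>r. if r = 0 then a else 0)) = init_num a"
    using self_encoding_initial_code[of K] K_def by blast
  define A where "A = simulator.sim_code prog K (0, 0, 0) 0 (\<lambda>r. if r = 0 then a else 0)"
  define v where "v = (if infinite_lineage A then 1 else 0 :: nat)"
  have "rec_eval f [init_num a] v"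
    using decides[of A] a by (simp add: A_def v_def simulator.proper_sim_code)
  then have "reaches cp (\<lambda>r. if r = 0 then a else 0) ((\<lambda>r. if r = 0 then a else 0)(2 := v))"
    unfolding cp_def by (intro reaches_compile_unary ev_comp1[OF ev_init_num])
  then have "infinite_lineage A \<longleftrightarrow> v = 0"
    unfolding A_def prog_def using lineage_of_guarded_program areg_less_Suc_max_reg K_def prog_def by blast
  then show False by (simp add: v_def split: if_splits)
qed

end
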